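(* Let the data model, network assumptions, and running consensus algorithm below hold. Then for every node $i\in\{1,\dots,N\}$ and each $l\in\{0,1\}$, the sequence of laws of $x_i(k)$ under $H_l$, $k=1,2,\dots$, satisfies the large deviations principle with good rate function $$I_{(l)}(t)=\frac{(t-m_L^{(l)})^2}{2\sigma_L^2},$$ where $m_L^{(l)}=\frac{(-1)^{l+1}}{2}(m_1-m_0)^\top S^{-1}(m_1-m_0)$ and $\sigma_L^2=(m_1-m_0)^\top S^{-1}(m_1-m_0)$ (the same rate function as for the centralized detector $\frac1k\sum_{j\le k}L(j)$).
   Context: Data model: $N$ sensors; at each time $k=1,2,\dots$ the observation vector is $y(k)=(y_1(k),\dots,y_N(k))^\top$ with $y(k)=m_l+\zeta(k)$ under $H_l$, $l=0,1$, where $m_0\ne m_1\in\mathbb{R}^N$ are constant and $\{\zeta(k)\}$ is i.i.d. $\mathcal{N}(0,S)$ with $S$ positive definite. Let $v=S^{-1}(m_1-m_0)$ and $\eta_i(k)=v_i\big(y_i(k)-\frac{[m_1]_i+[m_0]_i}{2}\big)$, $\eta(k)=(\eta_1(k),\dots,\eta_N(k))^\top$ (so $\sum_i\eta_i(k)=(m_1-m_0)^\top S^{-1}(y(k)-\frac{m_1+m_0}{2})$). Network assumptions: $\{W(k)\}_{k\ge1}$ is a deterministic sequence of $N\times N$ matrices such that (1) each $W(k)$ is symmetric and stochastic (nonnegative entries, rows summing to $1$); (2) there is $W_{\min}\in(0,1)$ with $W_{ii}(k)\ge W_{\min}$ for all $i,k$, and $W_{ij}(k)\ge W_{\min}$ whenever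 $i\ne j$ and $W_{ij}(k)>0$; (3) letting $\mathcal{E}(k)=\{\{i,j\}: i<j,\ W_{ij}(k)>0\}$, there is an integer $B\ge1$ such that for every $k$ the undirected graph on $\{1,\dots,N\}$ with edge set $\bigcup_{l=k+1}^{k+B}\mathcal{E}(l)$ is connected. Running consensus algorithm: $x(1)=N\eta(1)$ and $x(k+1)=\frac{k}{k+1}W(k)x(k)+\frac{1}{k+1}N\eta(k+1)$ for $k\ge1$, where $x(k)=(x_1(k),\dots,x_N(k))^\top$. LDP: a sequence of probability measures $\{\theta_k\}$ on $\mathbb{R}$ satisfies the LDP with rate function $\mathcal{J}$ if for every closed $F$, $\limsup_k\frac1k\log\theta_k(F)\le-\inf_F\mathcal{J}$, and for every open $G$, $\liminf_k\frac1k\log\theta_k(G)\ge-\inf_G\mathcal{J}$; it is good if sublevel sets of $\mathcal{J}$ are compact. *)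

theory Defs
  imports "HOL-Probability.Probability"
begin

text \<open>Sensors are indexed by a finite type 'n, so N = CARD('n).\<close>

definition pos_def_mat :: "real^'n^'n \<Rightarrow> bool" where
  "pos_def_mat S \<longleftrightarrow> transpose S = S \<and> (\<forall>x. x \<noteq> 0 \<longrightarrow> x \<bullet> (S *v x) > 0)"

definition gauss_density :: "real^'n^'n \<Rightarrow> real^'n \<Rightarrow> real" where
  "gauss_density S x =
     exp (- (x \<bullet> (matrix_inv S *v x)) / 2) / sqrt ((2 * pi) ^ CARD('n) * det S)"

definition eta_vec :: "real^'n^'n \<Rightarrow> real^'n \<Rightarrow> real^'n \<Rightarrow> real^'n \<Rightarrow> real^'n" where
  "eta_vec S m0 m1 y =
     (\<chi> i. (matrix_inv S *v (m1 - m0)) $ i * (y $ i - (m1 $ i + m0 $ i) / 2))"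

text \<open>Running consensus: rcons W e k = x(k) for k \<ge> 1 (value at k = 0 is a dummy).\<close>
fun rcons :: "(nat \<Rightarrow> real^'n^'n) \<Rightarrow> (nat \<Rightarrow> real^'n) \<Rightarrow> nat \<Rightarrow> real^'n" where
  "rcons W e 0 = 0"
| "rcons W e (Suc 0) = real CARD('n) *\<^sub>R e 1"
| "rcons W e (Suc (Suc k)) =
     (real (Suc k) / real (Suc (Suc k))) *\<^sub>R (W (Suc k) *v rcons W e (Suc k))
     + (1 / real (Suc (Suc k))) *\<^sub>R (real CARD('n) *\<^sub>R e (Suc (Suc k)))"

text \<open>Large deviations principle for a sequence of probability measures on the reals.
  Log-probabilities are taken in ereal, with log 0 = -infinity.\<close>
definition log_prob_rate :: "real measure \<Rightarrow> nat \<Rightarrow> real set \<Rightarrow> ereal" where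
  "log_prob_rate \<theta> k A =
     (if measure \<theta> A = 0 then - \<infinity> else ereal (ln (measure \<theta> A) / real k))"

definition satisfies_LDP :: "(nat \<Rightarrow> real measure) \<Rightarrow> (real \<Rightarrow> real) \<Rightarrow> bool" where
  "satisfies_LDP \<theta> J \<longleftrightarrow>
     (\<forall>F. closed F \<longrightarrow>
        limsup (\<lambda>k. log_prob_rate (\<theta> k) k F) \<le> - (INF t\<in>F. ereal (J t))) \<and>
     (\<forall>G. open G \<longrightarrow>
        liminf (\<lambda>k. log_prob_rate (\<theta> k) k G) \<ge> - (INF t\<in>G. ereal (J t)))"

definition good_rate_function :: "(real \<Rightarrow> real) \<Rightarrow> bool" where
  "good_rate_function J \<longleftrightarrow> (\<forall>c. compact {t. J t \<le> c})"

end

theory Submission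
  imports Defs
begin

text \<open>
  At node i the running consensus state x_i(k) is an affine function of the
  independent Gaussian noise vectors zeta(1), ..., zeta(k): its coefficients are the rows of the
  transition products W(k-1) ... W(j) of the consensus matrices, averaged over time. Hence x_i(k)
  is Gaussian and E exp (c x_i(k)) = exp (c a_k + c^2 s_k / 2) for explicit a_k and s_k.
  The proof has three independent ingredients.

  1. An abstract LDP (locale gaussian_moments): every sequence with such moment generating
     functions, a_k tending to m and k s_k tending to sigma2 > 0, satisfies the LDP with rate
     (t - m)^2 / (2 sigma2). Upper bound by Chernoff bounds, lower bound by exponential tilting.
  2. Exponential moments of linear functionals of independent Gaussian vectors.
  3. Mixing of the consensus products (locale consensus_network): over every connected window
     of B steps the deviation of a row from the uniform vector contracts by a fixed factor, so
     the deviations decay geometrically and are summable.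
  The summability in 3 shows that a_k and k s_k converge to the mean and variance of the
  centralized detector (locale running_consensus_detection), and theorem9 follows from 1.
\<close>

section \<open>Large deviations for sequences with Gaussian moment generating functions\<close>

lemma chernoff_upper:
  fixes X :: "'a \<Rightarrow> real"
  assumes "prob_space M" and [measurable]: "X \<in> borel_measurable M"
    and int: "integrable M (\<lambda>\<omega>. exp (s * X \<omega>))" and "0 \<le> s"
  shows "measure M {\<omega>\<in>space M. u \<le> X \<omega>} \<le> exp (- s * u) * (\<integral>\<omega>. exp (s * X \<omega>) \<partial>M)"
proof -
  interpret prob_space M by fact
  have "measure M {\<omega>\<in>space M. u \<le> X \<omega>} \<le> measure M {\<omega>\<in>space M. exp (s * u) \<le> exp (s * X \<omega>)}"
    using \<open>0 \<le> s\<close> by (intro finite_measure_mono) (auto intro: mult_left_mono)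
  also have "\<dots> \<le> (\<integral>\<omega>. exp (s * X \<omega>) \<partial>M) / exp (s * u)"
    using int by (intro integral_Markov_inequality_measure[where A = "space M"]) auto
  finally show ?thesis by (simp add: exp_minus field_simps)
qed

lemma chernoff_lower:
  fixes X :: "'a \<Rightarrow> real"
  assumes "prob_space M" and "X \<in> borel_measurable M"
    and "integrable M (\<lambda>\<omega>. exp (- s * X \<omega>))" and "0 \<le> s"
  shows "measure M {\<omega>\<in>space M. X \<omega> \<le> u} \<le> exp (s * u) * (\<integral>\<omega>. exp (- s * X \<omega>) \<partial>M)"
  using chernoff_upper[OF assms(1) _ _ assms(4), of "\<lambda>\<omega>. - X \<omega>" "- u"] assms(2,3) by simp

text \<open>Translating exponential bounds on probabilities into bounds on the normalized
  log-probabilities used in the LDP; the factor 2 costs only ln 2 / k.\<close>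

lemma log_prob_rate_le:
  assumes "k \<ge> 1" and "measure \<mu> A \<le> 2 * exp (real k * e)"
  shows "log_prob_rate \<mu> k A \<le> ereal (ln 2 / real k + e)"
proof (cases "measure \<mu> A = 0")
  case False
  then have "0 < measure \<mu> A" using measure_nonneg[of \<mu> A] by linarith
  then have "ln (measure \<mu> A) \<le> ln (2 * exp (real k * e))"
    using assms(2) by (subst ln_le_cancel_iff) auto
  also have "\<dots> = ln 2 + real k * e" by (simp add: ln_mult)
  finally have "ln (measure \<mu> A) \<le> ln 2 + real k * e" .
  then have "ln (measure \<mu> A) / real k \<le> ln 2 / real k + e"
    using assms(1) by (simp add: field_simps)
  then show ?thesis using False by (simp add: log_prob_rate_def)
qed (simp add: log_prob_rate_def)

lemma log_prob_rate_ge: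
  assumes "k \<ge> 1" and "exp (real k * e) / 2 \<le> measure \<mu> A"
  shows "ereal (e - ln 2 / real k) \<le> log_prob_rate \<mu> k A"
proof -
  have pos: "0 < measure \<mu> A"
    using assms(2) exp_gt_zero[of "real k * e"] by linarith
  have "real k * e - ln 2 = ln (exp (real k * e) / 2)" by (simp add: ln_div)
  also have "\<dots> \<le> ln (measure \<mu> A)"
    using assms(2) pos by (subst ln_le_cancel_iff) auto
  finally have "(real k * e - ln 2) / real k \<le> ln (measure \<mu> A) / real k"
    by (rule divide_right_mono) simp
  moreover have "(real k * e - ln 2) / real k = e - ln 2 / real k"
    using assms(1) by (simp add: field_simps)
  ultimately have "e - ln 2 / real k \<le> ln (measure \<mu> A) / real k" by simp
  then show ?thesis using pos by (simp add: log_prob_rate_def)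
qed

lemma limsup_log_prob_rate_le:
  assumes "eventually (\<lambda>k. measure (\<mu> k) A \<le> 2 * exp (real k * e k)) sequentially" and "e \<longlonglongrightarrow> c"
  shows "limsup (\<lambda>k. log_prob_rate (\<mu> k) k A) \<le> ereal c"
proof -
  have "eventually (\<lambda>k. log_prob_rate (\<mu> k) k A \<le> ereal (ln 2 / real k + e k)) sequentially"
    using assms(1) eventually_ge_at_top[of 1] by eventually_elim (rule log_prob_rate_le)
  then have "limsup (\<lambda>k. log_prob_rate (\<mu> k) k A) \<le> limsup (\<lambda>k. ereal (ln 2 / real k + e k))"
    by (rule Limsup_mono)
  also have "(\<lambda>k. ln 2 / real k + e k) \<longlonglongrightarrow> 0 + c"
    by (intro tendsto_intros assms(2) tendsto_divide_0[OF tendsto_const] filterlim_real_sequentially)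
  then have "limsup (\<lambda>k. ereal (ln 2 / real k + e k)) = ereal c"
    by (intro lim_imp_Limsup) auto
  finally show ?thesis .
qed

lemma liminf_log_prob_rate_ge:
  assumes "eventually (\<lambda>k. exp (real k * e k) / 2 \<le> measure (\<mu> k) A) sequentially" and "e \<longlonglongrightarrow> c"
  shows "ereal c \<le> liminf (\<lambda>k. log_prob_rate (\<mu> k) k A)"
proof -
  have "(\<lambda>k. e k - ln 2 / real k) \<longlonglongrightarrow> c - 0"
    by (intro tendsto_intros assms(2) tendsto_divide_0[OF tendsto_const] filterlim_real_sequentially)
  then have "ereal c = liminf (\<lambda>k. ereal (e k - ln 2 / real k))"
    by (intro lim_imp_Liminf[symmetric]) auto
  also have "eventually (\<lambda>k. ereal (e k - ln 2 / real k) \<le> log_prob_rate (\<mu> k) k A) sequentially"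
    using assms(1) eventually_ge_at_top[of 1] by eventually_elim (rule log_prob_rate_ge)
  then have "liminf (\<lambda>k. ereal (e k - ln 2 / real k)) \<le> liminf (\<lambda>k. log_prob_rate (\<mu> k) k A)"
    by (rule Liminf_mono)
  finally show ?thesis .
qed

lemma eventually_exp_rate_le:
  fixes f g :: "nat \<Rightarrow> real"
  assumes "f \<longlonglongrightarrow> a" and "g \<longlonglongrightarrow> b" and "b < a"
  shows "eventually (\<lambda>k. exp (real k * g k) \<le> exp (real k * f k) / 4) sequentially"
proof -
  have "(\<lambda>k. g k - f k) \<longlonglongrightarrow> b - a" using assms by (intro tendsto_intros)
  then have gap: "eventually (\<lambda>k. g k - f k < (b - a) / 2) sequentially"
    using assms(3) by (intro order_tendstoD) auto
  obtain K :: nat where K: "2 * ln 4 / (a - b) < real K" using reals_Archimedean2 by blast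
  show ?thesis using gap eventually_ge_at_top[of K]
  proof eventually_elim
    case (elim k)
    have "2 * ln 4 / (a - b) < real k"
      using K elim(2) by (meson of_nat_le_iff order_less_le_trans)
    then have "ln 4 \<le> real k * ((a - b) / 2)"
      using assms(3) by (simp add: divide_less_eq mult.commute)
    also have "\<dots> \<le> real k * (f k - g k)"
      using elim(1) by (intro mult_left_mono) auto
    finally have "real k * g k \<le> real k * f k - ln 4" by (simp add: algebra_simps)
    then have "exp (real k * g k) \<le> exp (real k * f k - ln 4)" by simp
    then show ?case by (simp add: exp_diff)
  qed
qed

lemma exp_tilt_split:
  fixes y t \<theta> \<eta> \<delta> :: real
  assumes "0 \<le> \<eta>"
  shows "exp (\<theta> * y) \<le> exp (\<theta> * t + \<bar>\<theta>\<bar> * \<delta>) * indicator {t - \<delta> <..< t + \<delta>} y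
           + exp (- \<eta> * (t + \<delta>)) * exp ((\<theta> + \<eta>) * y) + exp (\<eta> * (t - \<delta>)) * exp ((\<theta> - \<eta>) * y)"
    (is "_ \<le> ?near + ?above + ?below")
proof -
  have "0 \<le> ?near" "0 \<le> ?above" "0 \<le> ?below" by (simp_all add: indicator_def)
  consider "\<bar>y - t\<bar> < \<delta>" | "t + \<delta> \<le> y" | "y \<le> t - \<delta>" by linarith
  then show ?thesis
  proof cases
    case 1
    have "\<theta> * (y - t) \<le> \<bar>\<theta>\<bar> * \<bar>y - t\<bar>" by (metis abs_ge_self abs_mult)
    also have "\<dots> \<le> \<bar>\<theta>\<bar> * \<delta>" using 1 by (intro mult_left_mono) auto
    finally have "exp (\<theta> * y) \<le> exp (\<theta> * t + \<bar>\<theta>\<bar> * \<delta>)" by (simp add: algebra_simps)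
    moreover have "?near = exp (\<theta> * t + \<bar>\<theta>\<bar> * \<delta>)" using 1 by (simp add: abs_less_iff)
    ultimately show ?thesis using \<open>0 \<le> ?above\<close> \<open>0 \<le> ?below\<close> by linarith
  next
    case 2
    have "0 \<le> \<eta> * (y - (t + \<delta>))" using 2 assms by simp
    then have "exp (\<theta> * y) \<le> ?above" by (simp add: mult_exp_exp algebra_simps)
    then show ?thesis using \<open>0 \<le> ?near\<close> \<open>0 \<le> ?below\<close> by linarith
  next
    case 3
    have "0 \<le> \<eta> * ((t - \<delta>) - y)" using 3 assms by simp
    then have "exp (\<theta> * y) \<le> ?below" by (simp add: mult_exp_exp algebra_simps)
    then show ?thesis using \<open>0 \<le> ?near\<close> \<open>0 \<le> ?above\<close> by linarith
  qed
qed

lemma exp_moment_tilt_bound: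
  fixes X :: "'a \<Rightarrow> real"
  assumes "prob_space M" and [measurable]: "X \<in> borel_measurable M" and "0 \<le> \<eta>"
    and int: "\<And>c. integrable M (\<lambda>\<omega>. exp (c * X \<omega>))"
  shows "(\<integral>\<omega>. exp (\<theta> * X \<omega>) \<partial>M)
           \<le> exp (\<theta> * t + \<bar>\<theta>\<bar> * \<delta>) * measure M {\<omega>\<in>space M. X \<omega> \<in> {t - \<delta> <..< t + \<delta>}}
             + exp (- \<eta> * (t + \<delta>)) * (\<integral>\<omega>. exp ((\<theta> + \<eta>) * X \<omega>) \<partial>M)
             + exp (\<eta> * (t - \<delta>)) * (\<integral>\<omega>. exp ((\<theta> - \<eta>) * X \<omega>) \<partial>M)"
proof -
  interpret prob_space M by fact
  define A where "A = {\<omega>\<in>space M. X \<omega> \<in> {t - \<delta> <..< t + \<delta>}}"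
  have A [measurable]: "A \<in> sets M" unfolding A_def by measurable
  let ?f = "\<lambda>\<omega>. exp (\<theta> * t + \<bar>\<theta>\<bar> * \<delta>) * indicator A \<omega>
           + exp (- \<eta> * (t + \<delta>)) * exp ((\<theta> + \<eta>) * X \<omega>) + exp (\<eta> * (t - \<delta>)) * exp ((\<theta> - \<eta>) * X \<omega>)"
  have int_A: "integrable M (\<lambda>\<omega>. exp (\<theta> * t + \<bar>\<theta>\<bar> * \<delta>) * indicator A \<omega>)"
    by (simp add: integrable_indicator_iff emeasure_eq_measure)
  have int_above: "integrable M (\<lambda>\<omega>. exp (- \<eta> * (t + \<delta>)) * exp ((\<theta> + \<eta>) * X \<omega>))"
    and int_below: "integrable M (\<lambda>\<omega>. exp (\<eta> * (t - \<delta>)) * exp ((\<theta> - \<eta>) * X \<omega>))"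
    using int by simp_all
  have "(\<integral>\<omega>. exp (\<theta> * X \<omega>) \<partial>M) \<le> (\<integral>\<omega>. ?f \<omega> \<partial>M)"
  proof (rule integral_mono)
    fix \<omega> assume "\<omega> \<in> space M"
    then show "exp (\<theta> * X \<omega>) \<le> ?f \<omega>"
      using exp_tilt_split[OF \<open>0 \<le> \<eta>\<close>, of \<theta> "X \<omega>" t \<delta>] by (simp add: A_def indicator_def)
  qed (use int int_A int_above int_below in auto)
  also have "\<dots> = (\<integral>\<omega>. exp (\<theta> * t + \<bar>\<theta>\<bar> * \<delta>) * indicator A \<omega> \<partial>M)
      + (\<integral>\<omega>. exp (- \<eta> * (t + \<delta>)) * exp ((\<theta> + \<eta>) * X \<omega>) \<partial>M)
      + (\<integral>\<omega>. exp (\<eta> * (t - \<delta>)) * exp ((\<theta> - \<eta>) * X \<omega>) \<partial>M)"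
    using int_A int_above int_below by (simp only: Bochner_Integration.integral_add Bochner_Integration.integrable_add)
  finally show ?thesis
    using A sets.sets_into_space[OF A] by (simp add: A_def Int_absorb2)
qed

definition gauss_rate :: "real \<Rightarrow> real \<Rightarrow> real \<Rightarrow> real" where
  "gauss_rate m \<sigma>2 t = (t - m)\<^sup>2 / (2 * \<sigma>2)"

text \<open>For positive variance its sublevel sets are closed intervals, hence compact.\<close>

lemma good_gauss_rate:
  assumes "0 < \<sigma>2"
  shows "good_rate_function (gauss_rate m \<sigma>2)"
  unfolding good_rate_function_def
proof
  fix c
  have "{t. gauss_rate m \<sigma>2 t \<le> c} \<subseteq> cball m (sqrt (2 * \<sigma>2 * c))"
  proof
    fix t assume "t \<in> {t. gauss_rate m \<sigma>2 t \<le> c}"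
    then have "(t - m)\<^sup>2 \<le> 2 * \<sigma>2 * c" using assms by (simp add: gauss_rate_def field_simps)
    then have "sqrt ((t - m)\<^sup>2) \<le> sqrt (2 * \<sigma>2 * c)" by (rule real_sqrt_le_mono)
    then show "t \<in> cball m (sqrt (2 * \<sigma>2 * c))" by (simp add: dist_real_def abs_minus_commute)
  qed
  then have "bounded {t. gauss_rate m \<sigma>2 t \<le> c}" by (rule bounded_subset[OF bounded_cball])
  moreover have "closed {t. gauss_rate m \<sigma>2 t \<le> c}"
    unfolding gauss_rate_def using assms by (intro closed_Collect_le continuous_intros) auto
  ultimately show "compact {t. gauss_rate m \<sigma>2 t \<le> c}" by (simp add: compact_eq_bounded_closed)
qed

locale gaussian_moments = prob_space M for M :: "'w measure" +
  fixes X :: "nat \<Rightarrow> 'w \<Rightarrow> real" and a s :: "nat \<Rightarrow> real" and m \<sigma>2 :: real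
  assumes X_measurable [measurable]: "\<And>k. X k \<in> borel_measurable M"
    and mgf_integrable: "\<And>k c. k \<ge> 1 \<Longrightarrow> integrable M (\<lambda>\<omega>. exp (c * X k \<omega>))"
    and mgf: "\<And>k c. k \<ge> 1 \<Longrightarrow> (\<integral>\<omega>. exp (c * X k \<omega>) \<partial>M) = exp (c * a k + c\<^sup>2 * s k / 2)"
    and mean_lim: "a \<longlonglongrightarrow> m" and variance_lim: "(\<lambda>k. real k * s k) \<longlonglongrightarrow> \<sigma>2"
    and variance_pos: "0 < \<sigma>2"
begin

abbreviation I :: "real \<Rightarrow> real" where
  "I \<equiv> gauss_rate m \<sigma>2"

abbreviation law :: "nat \<Rightarrow> real measure" where
  "law k \<equiv> distr M borel (X k)"

text \<open>The scaled cumulant generating function (1/k) log E exp (k theta X k) and its limit.\<close>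

definition cgf :: "nat \<Rightarrow> real \<Rightarrow> real" where
  "cgf k \<theta> = \<theta> * a k + \<theta>\<^sup>2 * (real k * s k) / 2"

definition limit_cgf :: "real \<Rightarrow> real" where
  "limit_cgf \<theta> = \<theta> * m + \<theta>\<^sup>2 * \<sigma>2 / 2"

lemma scaled_mgf: "k \<ge> 1 \<Longrightarrow> (\<integral>\<omega>. exp ((real k * \<theta>) * X k \<omega>) \<partial>M) = exp (real k * cgf k \<theta>)"
  unfolding mgf cgf_def by (simp add: power2_eq_square algebra_simps)

lemma cgf_lim: "(\<lambda>k. cgf k \<theta>) \<longlonglongrightarrow> limit_cgf \<theta>"
  unfolding cgf_def limit_cgf_def by (intro tendsto_intros mean_lim variance_lim) simp

lemma measure_law: "A \<in> sets borel \<Longrightarrow> measure (law k) A = measure M {\<omega>\<in>space M. X k \<omega> \<in> A}"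
  by (subst measure_distr) (auto simp: vimage_def Int_def conj_commute)

lemma tail_above:
  assumes "k \<ge> 1" and "0 \<le> \<theta>"
  shows "measure M {\<omega>\<in>space M. u \<le> X k \<omega>} \<le> exp (real k * (cgf k \<theta> - \<theta> * u))"
proof -
  have "measure M {\<omega>\<in>space M. u \<le> X k \<omega>}
      \<le> exp (- (real k * \<theta>) * u) * (\<integral>\<omega>. exp ((real k * \<theta>) * X k \<omega>) \<partial>M)"
    using assms by (intro chernoff_upper[OF prob_space_axioms X_measurable mgf_integrable]) auto
  also have "\<dots> = exp (real k * (cgf k \<theta> - \<theta> * u))"
    unfolding scaled_mgf[OF assms(1)] mult_exp_exp by (simp add: algebra_simps)
  finally show ?thesis .
qed

lemma tail_below:
  assumes "k \<ge> 1" and "0 \<le> \<theta>"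
  shows "measure M {\<omega>\<in>space M. X k \<omega> \<le> u} \<le> exp (real k * (cgf k (- \<theta>) + \<theta> * u))"
proof -
  have "measure M {\<omega>\<in>space M. X k \<omega> \<le> u}
      \<le> exp ((real k * \<theta>) * u) * (\<integral>\<omega>. exp ((real k * (- \<theta>)) * X k \<omega>) \<partial>M)"
    using assms chernoff_lower[OF prob_space_axioms X_measurable mgf_integrable, of k "real k * \<theta>" u] by simp
  also have "\<dots> = exp (real k * (cgf k (- \<theta>) + \<theta> * u))"
    unfolding scaled_mgf[OF assms(1)] mult_exp_exp by (simp add: algebra_simps)
  finally show ?thesis .
qed

lemma rate_level_distance:
  assumes "0 \<le> c" and "c \<le> I t"
  shows "sqrt (2 * \<sigma>2 * c) \<le> \<bar>t - m\<bar>"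
proof -
  have "2 * \<sigma>2 * c \<le> (t - m)\<^sup>2"
    using assms(2) variance_pos by (simp add: gauss_rate_def field_simps)
  then have "sqrt (2 * \<sigma>2 * c) \<le> sqrt ((t - m)\<^sup>2)" by (rule real_sqrt_le_mono)
  then show ?thesis by simp
qed

lemma two_sided_tail:
  assumes k: "k \<ge> 1" and \<theta>: "0 \<le> \<theta>" and F: "F \<in> sets borel"
    and far: "\<And>t. t \<in> F \<Longrightarrow> m + r \<le> t \<or> t \<le> m - r"
  shows "measure (law k) F \<le> 2 * exp (real k * max (cgf k \<theta> - \<theta> * (m + r)) (cgf k (- \<theta>) + \<theta> * (m - r)))"
    (is "_ \<le> 2 * exp (real k * ?e)")
proof -
  have "measure (law k) F = measure M {\<omega>\<in>space M. X k \<omega> \<in> F}" using F by (rule measure_law)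
  also have "\<dots> \<le> measure M ({\<omega>\<in>space M. m + r \<le> X k \<omega>} \<union> {\<omega>\<in>space M. X k \<omega> \<le> m - r})"
    using far by (intro finite_measure_mono) auto
  also have "\<dots> \<le> measure M {\<omega>\<in>space M. m + r \<le> X k \<omega>} + measure M {\<omega>\<in>space M. X k \<omega> \<le> m - r}"
    by (intro measure_Un_le) auto
  also have "\<dots> \<le> exp (real k * ?e) + exp (real k * ?e)"
  proof (intro add_mono order_trans[OF tail_above[OF k \<theta>]] order_trans[OF tail_below[OF k \<theta>]])
    show "exp (real k * (cgf k \<theta> - \<theta> * (m + r))) \<le> exp (real k * ?e)"
      and "exp (real k * (cgf k (- \<theta>) + \<theta> * (m - r))) \<le> exp (real k * ?e)"
      by (simp_all add: mult_left_mono)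
  qed
  finally show ?thesis by simp
qed

lemma upper_bound:
  assumes "closed F"
  shows "limsup (\<lambda>k. log_prob_rate (law k) k F) \<le> - (INF t\<in>F. ereal (I t))"
proof (cases "F = {}")
  case True
  then show ?thesis by (simp add: log_prob_rate_def Limsup_const)
next
  case False
  define c where "c = (INF t\<in>F. I t)"
  have bdd: "bdd_below (I ` F)"
    using variance_pos by (intro bdd_belowI[of _ 0]) (auto simp: gauss_rate_def)
  have INF_eq: "(INF t\<in>F. ereal (I t)) = ereal c"
    using ereal_Inf'[OF bdd] False by (simp add: c_def image_comp)
  have c_nonneg: "0 \<le> c"
    unfolding c_def using False variance_pos by (intro cINF_greatest) (auto simp: gauss_rate_def)
  define r where "r = sqrt (2 * \<sigma>2 * c)"
  define \<theta> where "\<theta> = r / \<sigma>2"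
  have r_sq: "r\<^sup>2 = 2 * \<sigma>2 * c" using c_nonneg variance_pos by (simp add: r_def)
  have \<theta>_nonneg: "0 \<le> \<theta>" using variance_pos c_nonneg by (simp add: \<theta>_def r_def)
  have far: "m + r \<le> t \<or> t \<le> m - r" if "t \<in> F" for t
  proof -
    have "c \<le> I t" unfolding c_def using bdd that by (rule cINF_lower)
    then have "r \<le> \<bar>t - m\<bar>" unfolding r_def by (rule rate_level_distance[OF c_nonneg])
    then show ?thesis by linarith
  qed
  define e where "e k = max (cgf k \<theta> - \<theta> * (m + r)) (cgf k (- \<theta>) + \<theta> * (m - r))" for k
  have "e \<longlonglongrightarrow> max (limit_cgf \<theta> - \<theta> * (m + r)) (limit_cgf (- \<theta>) + \<theta> * (m - r))"
    unfolding e_def by (intro tendsto_intros cgf_lim)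
  moreover have "limit_cgf \<theta> - \<theta> * (m + r) = - c" and "limit_cgf (- \<theta>) + \<theta> * (m - r) = - c"
    using variance_pos r_sq by (simp_all add: limit_cgf_def \<theta>_def field_simps power2_eq_square)
  ultimately have "e \<longlonglongrightarrow> - c" by simp
  moreover have "eventually (\<lambda>k. measure (law k) F \<le> 2 * exp (real k * e k)) sequentially"
    using assms far unfolding e_def eventually_sequentially
    by (intro exI[of _ 1] allI impI two_sided_tail[OF _ \<theta>_nonneg]) auto
  ultimately have "limsup (\<lambda>k. log_prob_rate (law k) k F) \<le> ereal (- c)"
    by (intro limsup_log_prob_rate_le)
  then show ?thesis by (simp add: INF_eq)
qed

lemma scaled_tilt_bound:
  assumes k: "k \<ge> 1" and \<eta>: "0 \<le> \<eta>"
  shows "exp (real k * cgf k \<theta>)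
    \<le> exp (real k * (\<theta> * t + \<bar>\<theta>\<bar> * \<delta>)) * measure M {\<omega>\<in>space M. X k \<omega> \<in> {t - \<delta> <..< t + \<delta>}}
      + exp (real k * (cgf k (\<theta> + \<eta>) - \<eta> * (t + \<delta>))) + exp (real k * (cgf k (\<theta> - \<eta>) + \<eta> * (t - \<delta>)))"
proof -
  have "exp (real k * cgf k \<theta>) = (\<integral>\<omega>. exp ((real k * \<theta>) * X k \<omega>) \<partial>M)"
    by (simp add: scaled_mgf[OF k])
  also have "\<dots> \<le> exp ((real k * \<theta>) * t + \<bar>real k * \<theta>\<bar> * \<delta>) * measure M {\<omega>\<in>space M. X k \<omega> \<in> {t - \<delta> <..< t + \<delta>}}
      + exp (- (real k * \<eta>) * (t + \<delta>)) * (\<integral>\<omega>. exp ((real k * \<theta> + real k * \<eta>) * X k \<omega>) \<partial>M)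
      + exp ((real k * \<eta>) * (t - \<delta>)) * (\<integral>\<omega>. exp ((real k * \<theta> - real k * \<eta>) * X k \<omega>) \<partial>M)"
    using \<eta> by (intro exp_moment_tilt_bound[OF prob_space_axioms X_measurable _ mgf_integrable[OF k]]) simp
  also have "\<dots> = exp (real k * (\<theta> * t + \<bar>\<theta>\<bar> * \<delta>)) * measure M {\<omega>\<in>space M. X k \<omega> \<in> {t - \<delta> <..< t + \<delta>}}
      + exp (real k * (cgf k (\<theta> + \<eta>) - \<eta> * (t + \<delta>))) + exp (real k * (cgf k (\<theta> - \<eta>) + \<eta> * (t - \<delta>)))"
    unfolding distrib_left[symmetric] right_diff_distrib[symmetric] scaled_mgf[OF k]
    by (simp add: mult_exp_exp abs_mult algebra_simps)
  finally show ?thesis .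
qed

lemma limit_cgf_tilt:
  assumes "\<theta> = (t - m) / \<sigma>2" and "\<eta> = \<delta> / \<sigma>2"
  shows "limit_cgf \<theta> - \<theta> * t = - I t"
    and "limit_cgf (\<theta> + \<eta>) - \<eta> * (t + \<delta>) = limit_cgf \<theta> - \<delta>\<^sup>2 / (2 * \<sigma>2)"
    and "limit_cgf (\<theta> - \<eta>) + \<eta> * (t - \<delta>) = limit_cgf \<theta> - \<delta>\<^sup>2 / (2 * \<sigma>2)"
  using variance_pos
  by (simp_all add: assms limit_cgf_def gauss_rate_def field_simps power2_eq_square)

lemma lower_bound_near:
  assumes "0 < \<delta>" and "ball t \<delta> \<subseteq> G" and "G \<in> sets borel"
  shows "ereal (- I t - \<bar>(t - m) / \<sigma>2\<bar> * \<delta>) \<le> liminf (\<lambda>k. log_prob_rate (law k) k G)"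
proof -
  define \<theta> where "\<theta> = (t - m) / \<sigma>2"
  define \<eta> where "\<eta> = \<delta> / \<sigma>2"
  define \<kappa> where "\<kappa> = \<delta>\<^sup>2 / (2 * \<sigma>2)"
  have \<eta>_nonneg: "0 \<le> \<eta>" using assms(1) variance_pos by (simp add: \<eta>_def)
  have \<kappa>_pos: "0 < \<kappa>" using assms(1) variance_pos by (simp add: \<kappa>_def)
  define above where "above k = cgf k (\<theta> + \<eta>) - \<eta> * (t + \<delta>)" for k
  define below where "below k = cgf k (\<theta> - \<eta>) + \<eta> * (t - \<delta>)" for k
  \<comment> \<open>Both tail terms are exponentially negligible compared with the tilted moment.\<close>
  have "above \<longlonglongrightarrow> limit_cgf (\<theta> + \<eta>) - \<eta> * (t + \<delta>)"
    and "below \<longlonglongrightarrow> limit_cgf (\<theta> - \<eta>) + \<eta> * (t - \<delta>)"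
    unfolding above_def below_def by (intro tendsto_intros cgf_lim)+
  then have lim_above: "above \<longlonglongrightarrow> limit_cgf \<theta> - \<kappa>" and lim_below: "below \<longlonglongrightarrow> limit_cgf \<theta> - \<kappa>"
    by (simp_all add: limit_cgf_tilt(2,3)[OF \<theta>_def \<eta>_def] \<kappa>_def)
  have "eventually (\<lambda>k. exp (real k * above k) \<le> exp (real k * cgf k \<theta>) / 4) sequentially"
    by (rule eventually_exp_rate_le[OF cgf_lim lim_above]) (use \<kappa>_pos in simp)
  moreover have "eventually (\<lambda>k. exp (real k * below k) \<le> exp (real k * cgf k \<theta>) / 4) sequentially"
    by (rule eventually_exp_rate_le[OF cgf_lim lim_below]) (use \<kappa>_pos in simp)
  ultimately have mass_near:
  "eventually (\<lambda>k. exp (real k * (cgf k \<theta> - \<theta> * t - \<bar>\<theta>\<bar> * \<delta>)) / 2 \<le> measure (law k) G) sequentially"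
    using eventually_ge_at_top[of 1]
  proof eventually_elim
    case (elim k)
    let ?near = "measure M {\<omega>\<in>space M. X k \<omega> \<in> {t - \<delta> <..< t + \<delta>}}"
    have "exp (real k * cgf k \<theta>) / 2 \<le> exp (real k * (\<theta> * t + \<bar>\<theta>\<bar> * \<delta>)) * ?near"
      using scaled_tilt_bound[OF elim(3) \<eta>_nonneg, of \<theta> t \<delta>] elim(1,2)
      unfolding above_def below_def by linarith
    then have "exp (real k * (cgf k \<theta> - \<theta> * t - \<bar>\<theta>\<bar> * \<delta>)) / 2 \<le> ?near"
      by (simp add: exp_diff right_diff_distrib field_simps)
    also have "?near \<le> measure M {\<omega>\<in>space M. X k \<omega> \<in> G}"
      using assms(2,3) by (intro finite_measure_mono) (auto simp: subset_eq dist_real_def abs_less_iff)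
    finally show ?case using assms(3) by (simp add: measure_law)
  qed
  have "(\<lambda>k. cgf k \<theta> - \<theta> * t - \<bar>\<theta>\<bar> * \<delta>) \<longlonglongrightarrow> limit_cgf \<theta> - \<theta> * t - \<bar>\<theta>\<bar> * \<delta>"
    by (intro tendsto_intros cgf_lim)
  from liminf_log_prob_rate_ge[OF mass_near this]
  show ?thesis unfolding limit_cgf_tilt(1)[OF \<theta>_def \<eta>_def] by (simp add: \<theta>_def)
qed

text \<open>Letting the radius shrink gives the LDP lower bound for open sets.\<close>

lemma lower_bound:
  assumes "open G"
  shows "- (INF t\<in>G. ereal (I t)) \<le> liminf (\<lambda>k. log_prob_rate (law k) k G)"
proof -
  let ?L = "liminf (\<lambda>k. log_prob_rate (law k) k G)"
  have "- ereal (I t) \<le> ?L" if t: "t \<in> G" for t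
  proof (rule ereal_le_epsilon2)
    fix e :: real assume e: "0 < e"
    obtain \<delta>0 where \<delta>0: "0 < \<delta>0" "ball t \<delta>0 \<subseteq> G"
      by (rule openE[OF assms t])
    let ?c = "\<bar>(t - m) / \<sigma>2\<bar>"
    define \<delta> where "\<delta> = min \<delta>0 (e / (?c + 1))"
    have "0 < e / (?c + 1)" using e by (simp add: add_nonneg_pos)
    then have \<delta>: "0 < \<delta>" "ball t \<delta> \<subseteq> G" using \<delta>0 by (auto simp: \<delta>_def)
    have "?c * \<delta> \<le> ?c * (e / (?c + 1))" by (intro mult_left_mono) (auto simp: \<delta>_def)
    also have "\<dots> \<le> e" using e by (simp add: field_simps)
    finally have "ereal (- I t - e) \<le> ereal (- I t - ?c * \<delta>)" by simp
    also have "\<dots> \<le> ?L" using lower_bound_near[OF \<delta>] assms by simp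
    finally have "ereal (- I t - e) + ereal e \<le> ?L + ereal e" by (rule add_right_mono)
    then show "- ereal (I t) \<le> ?L + ereal e" by simp
  qed
  then have "- ?L \<le> (INF t\<in>G. ereal (I t))"
    by (intro INF_greatest) (use ereal_uminus_le_reorder in blast)
  then show ?thesis using ereal_uminus_le_reorder by blast
qed

lemma LDP: "satisfies_LDP law I"
  unfolding satisfies_LDP_def using upper_bound lower_bound by blast

end

section \<open>Exponential moments of Gaussian vectors\<close>

text \<open>A positive definite matrix is invertible, so matrix_inv is a two-sided inverse.\<close>

lemma pos_def_mat_inverse:
  fixes S :: "real^'n^'n"
  assumes "pos_def_mat S"
  shows "S ** matrix_inv S = mat 1" and "matrix_inv S ** S = mat 1"
proof -
  have "x = 0" if "S *v x = 0" for x
    using assms that by (auto simp: pos_def_mat_def)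
  then obtain B where B: "B ** S = mat 1" using matrix_left_invertible_ker by blast
  then have "S ** B = mat 1" using matrix_left_right_inverse by blast
  with B have "\<exists>A. S ** A = mat 1 \<and> A ** S = mat 1" by blast
  then have "S ** matrix_inv S = mat 1 \<and> matrix_inv S ** S = mat 1"
    unfolding matrix_inv_def by (rule someI_ex)
  then show "S ** matrix_inv S = mat 1" "matrix_inv S ** S = mat 1" by auto
qed

lemma pos_def_mat_inverse_apply:
  fixes S :: "real^'n^'n"
  assumes "pos_def_mat S"
  shows "matrix_inv S *v (S *v u) = u" and "S *v (matrix_inv S *v u) = u"
  using pos_def_mat_inverse[OF assms] by (simp_all add: matrix_vector_mul_assoc)

lemma symmetric_inner:
  fixes S :: "real^'n^'n"
  assumes "transpose S = S"
  shows "u \<bullet> (S *v w) = (S *v u) \<bullet> w"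
  by (metis assms dot_lmul_matrix vector_transpose_matrix)

lemma gauss_complete_square:
  fixes S :: "real^'n^'n"
  assumes pd: "pos_def_mat S"
  shows "exp (u \<bullet> x) * gauss_density S x = exp (u \<bullet> (S *v u) / 2) * gauss_density S (x - S *v u)"
proof -
  let ?A = "matrix_inv S"
  have "?A *v (x - S *v u) = ?A *v x - u"
    using pos_def_mat_inverse_apply[OF pd] by (simp add: matrix_vector_mult_diff_distrib)
  moreover have "(S *v u) \<bullet> (?A *v x) = u \<bullet> x"
    using pd symmetric_inner[of S u "?A *v x"] pos_def_mat_inverse_apply[OF pd]
    by (simp add: pos_def_mat_def)
  ultimately have "(x - S *v u) \<bullet> (?A *v (x - S *v u)) = x \<bullet> (?A *v x) - 2 * (u \<bullet> x) + u \<bullet> (S *v u)"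
    by (simp add: inner_diff_left inner_diff_right inner_commute)
  then have "exp (u \<bullet> x) * exp (- (x \<bullet> (?A *v x)) / 2)
      = exp (u \<bullet> (S *v u) / 2) * exp (- ((x - S *v u) \<bullet> (?A *v (x - S *v u))) / 2)"
    unfolding mult_exp_exp by (simp add: field_simps)
  then show ?thesis
    unfolding gauss_density_def by (metis times_divide_eq_right)
qed

lemma nn_integral_lborel_translate:
  fixes c :: "'a::euclidean_space"
  assumes "f \<in> borel_measurable borel"
  shows "(\<integral>\<^sup>+x. f (c + x) \<partial>lborel) = (\<integral>\<^sup>+x. f x \<partial>lborel)"
proof -
  have "(\<integral>\<^sup>+x. f x \<partial>lborel) = (\<integral>\<^sup>+x. f x \<partial>distr lborel borel ((+) c))"
    by (simp add: lborel_distr_plus)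
  also have "\<dots> = (\<integral>\<^sup>+x. f (c + x) \<partial>lborel)"
    using assms by (subst nn_integral_distr) auto
  finally show ?thesis ..
qed

lemma gauss_density_measurable [measurable]: "gauss_density S \<in> borel_measurable borel"
  unfolding gauss_density_def
  by (intro borel_measurable_divide borel_measurable_continuous_onI continuous_intros
      linear_continuous_on matrix_vector_mul_linear borel_measurable_const) auto

lemma gauss_density_normalized:
  fixes S :: "real^'n^'n"
  assumes "prob_space M" and "distributed M lborel Z (\<lambda>x. ennreal (gauss_density S x))"
  shows "(\<integral>\<^sup>+x. ennreal (gauss_density S x) \<partial>lborel) = 1"
proof -
  have "(\<integral>\<^sup>+x. ennreal (gauss_density S x) * 1 \<partial>lborel) = (\<integral>\<^sup>+\<omega>. 1 \<partial>M)"
    by (rule distributed_nn_integral[OF assms(2)]) simp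
  then show ?thesis using prob_space.emeasure_space_1[OF assms(1)] by simp
qed

lemma gauss_density_pos:
  fixes S :: "real^'n^'n"
  assumes "prob_space M" and "distributed M lborel Z (\<lambda>x. ennreal (gauss_density S x))"
  shows "0 < gauss_density S x"
proof (rule ccontr)
  assume "\<not> 0 < gauss_density S x"
  then have "\<not> 0 < sqrt ((2 * pi) ^ CARD('n) * det S)"
    by (auto simp: gauss_density_def)
  then have "gauss_density S y \<le> 0" for y
    unfolding gauss_density_def by (simp add: divide_nonneg_nonpos)
  then have "\<And>y. ennreal (gauss_density S y) = 0" by (simp add: ennreal_eq_0_iff)
  then have "(\<integral>\<^sup>+y. ennreal (gauss_density S y) \<partial>lborel) = 0" by simp
  with gauss_density_normalized[OF assms] show False by simp
qed

text \<open>The moment generating function of the Gaussian law: completing the square turns the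
  integrand into a translate of the density.\<close>

lemma gauss_nn_mgf:
  fixes S :: "real^'n^'n" and Z :: "'w \<Rightarrow> real^'n"
  assumes prob: "prob_space M" and pd: "pos_def_mat S"
    and distr: "distributed M lborel Z (\<lambda>x. ennreal (gauss_density S x))"
  shows "(\<integral>\<^sup>+\<omega>. ennreal (exp (u \<bullet> Z \<omega>)) \<partial>M) = ennreal (exp (u \<bullet> (S *v u) / 2))"
proof -
  note pos = gauss_density_pos[OF prob distr]
  have "(\<integral>\<^sup>+\<omega>. ennreal (exp (u \<bullet> Z \<omega>)) \<partial>M)
      = (\<integral>\<^sup>+x. ennreal (gauss_density S x) * ennreal (exp (u \<bullet> x)) \<partial>lborel)"
    by (rule distributed_nn_integral[OF distr, symmetric]) measurable
  also have "\<dots> = (\<integral>\<^sup>+x. ennreal (exp (u \<bullet> (S *v u) / 2)) * ennreal (gauss_density S (- (S *v u) + x)) \<partial>lborel)"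
  proof (rule nn_integral_cong)
    fix x
    have "ennreal (gauss_density S x) * ennreal (exp (u \<bullet> x)) = ennreal (exp (u \<bullet> x) * gauss_density S x)"
      using pos[of x] by (simp add: ennreal_mult'' mult.commute)
    also have "\<dots> = ennreal (exp (u \<bullet> (S *v u) / 2)) * ennreal (gauss_density S (- (S *v u) + x))"
      using gauss_complete_square[OF pd, of u x] pos[of "x - S *v u"] by (simp add: ennreal_mult)
    finally show "ennreal (gauss_density S x) * ennreal (exp (u \<bullet> x))
        = ennreal (exp (u \<bullet> (S *v u) / 2)) * ennreal (gauss_density S (- (S *v u) + x))" .
  qed
  also have "\<dots> = ennreal (exp (u \<bullet> (S *v u) / 2)) * (\<integral>\<^sup>+x. ennreal (gauss_density S (- (S *v u) + x)) \<partial>lborel)"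
    by (rule nn_integral_cmult) measurable
  also have "(\<integral>\<^sup>+x. ennreal (gauss_density S (- (S *v u) + x)) \<partial>lborel) = 1"
    using nn_integral_lborel_translate[of "\<lambda>x. ennreal (gauss_density S x)" "- (S *v u)"]
      gauss_density_normalized[OF prob distr] by simp
  finally show ?thesis by simp
qed

lemma gauss_mgf:
  fixes S :: "real^'n^'n" and Z :: "'w \<Rightarrow> real^'n"
  assumes prob: "prob_space M" and pd: "pos_def_mat S"
    and distr: "distributed M lborel Z (\<lambda>x. ennreal (gauss_density S x))"
  shows "integrable M (\<lambda>\<omega>. exp (u \<bullet> Z \<omega>))"
    and "(\<integral>\<omega>. exp (u \<bullet> Z \<omega>) \<partial>M) = exp (u \<bullet> (S *v u) / 2)"
proof -
  have [measurable]: "Z \<in> borel_measurable M"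
    using distributed_measurable[OF distr] by simp
  note nn = gauss_nn_mgf[OF prob pd distr, of u]
  show "integrable M (\<lambda>\<omega>. exp (u \<bullet> Z \<omega>))"
    using nn by (intro integrableI_nn_integral_finite[where x = "exp (u \<bullet> (S *v u) / 2)"]) auto
  have "(\<integral>\<omega>. exp (u \<bullet> Z \<omega>) \<partial>M) = enn2real (\<integral>\<^sup>+\<omega>. ennreal (exp (u \<bullet> Z \<omega>)) \<partial>M)"
    by (intro integral_eq_nn_integral) auto
  then show "(\<integral>\<omega>. exp (u \<bullet> Z \<omega>) \<partial>M) = exp (u \<bullet> (S *v u) / 2)" using nn by simp
qed

lemma indep_gauss_mgf:
  fixes S :: "real^'n^'n" and \<zeta> :: "nat \<Rightarrow> 'w \<Rightarrow> real^'n"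
  assumes prob: "prob_space M" and pd: "pos_def_mat S"
    and indep: "prob_space.indep_vars M (\<lambda>_. borel) \<zeta> {1..}"
    and gauss: "\<And>k. k \<ge> 1 \<Longrightarrow> distributed M lborel (\<zeta> k) (\<lambda>x. ennreal (gauss_density S x))"
    and J: "finite J" "J \<subseteq> {1..}"
  shows "integrable M (\<lambda>\<omega>. \<Prod>j\<in>J. exp (u j \<bullet> \<zeta> j \<omega>))"
    and "(\<integral>\<omega>. (\<Prod>j\<in>J. exp (u j \<bullet> \<zeta> j \<omega>)) \<partial>M) = (\<Prod>j\<in>J. exp (u j \<bullet> (S *v u j) / 2))"
proof -
  interpret prob_space M by (rule prob)
  have indep_exp: "indep_vars (\<lambda>_. borel) (\<lambda>j \<omega>. exp (u j \<bullet> \<zeta> j \<omega>)) J"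
    using indep_vars_subset[OF indep J(2)]
    by (rule indep_vars_compose2[where Y = "\<lambda>j z. exp (u j \<bullet> z)"]) measurable
  have int: "integrable M (\<lambda>\<omega>. exp (u j \<bullet> \<zeta> j \<omega>))" if "j \<in> J" for j
    using gauss_mgf(1)[OF prob pd gauss] that J by auto
  show "integrable M (\<lambda>\<omega>. \<Prod>j\<in>J. exp (u j \<bullet> \<zeta> j \<omega>))"
    by (rule indep_vars_integrable[OF J(1) indep_exp int])
  have "(\<integral>\<omega>. (\<Prod>j\<in>J. exp (u j \<bullet> \<zeta> j \<omega>)) \<partial>M) = (\<Prod>j\<in>J. \<integral>\<omega>. exp (u j \<bullet> \<zeta> j \<omega>) \<partial>M)"
    by (rule indep_vars_lebesgue_integral[OF J(1) indep_exp int])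
  also have "\<dots> = (\<Prod>j\<in>J. exp (u j \<bullet> (S *v u j) / 2))"
    using gauss_mgf(2)[OF prob pd gauss] J by (intro prod.cong) auto
  finally show "(\<integral>\<omega>. (\<Prod>j\<in>J. exp (u j \<bullet> \<zeta> j \<omega>)) \<partial>M) = (\<Prod>j\<in>J. exp (u j \<bullet> (S *v u j) / 2))" .
qed

section \<open>Consensus matrices and contraction over a connected window\<close>

definition dirichlet_form :: "real^'n^'n \<Rightarrow> real^'n \<Rightarrow> real" where
  "dirichlet_form A y = (\<Sum>a\<in>UNIV. \<Sum>b\<in>UNIV. A$a$b * (y$a - y$b)^2) / 2"

definition consensus_matrix :: "real \<Rightarrow> real^'n^'n \<Rightarrow> bool" where
  "consensus_matrix w A \<longleftrightarrow> transpose A = A \<and> (\<forall>a b. 0 \<le> A$a$b) \<and> (\<forall>a. (\<Sum>b\<in>UNIV. A$a$b) = 1)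
     \<and> (\<forall>a. w \<le> A$a$a) \<and> (\<forall>a b. a \<noteq> b \<longrightarrow> 0 < A$a$b \<longrightarrow> w \<le> A$a$b)"

lemma symmetric_entry: "transpose A = A \<Longrightarrow> A$a$b = A$b$a"
  by (metis transpose_def vec_lambda_beta)

lemma norm_squared_components: "(norm (y::real^'n))^2 = (\<Sum>a\<in>UNIV. (y$a)^2)"
  by (simp add: norm_vec_def L2_set_def sum_nonneg)

lemma dirichlet_form_identity:
  fixes A :: "real^'n^'n"
  assumes sym: "transpose A = A" and rs: "\<And>a. (\<Sum>b\<in>UNIV. A$a$b) = 1"
  shows "dirichlet_form A y = (norm y)^2 - y \<bullet> (A *v y)"
proof -
  have column_sum: "(\<Sum>a\<in>UNIV. A$a$b) = 1" for b
    using rs[of b] symmetric_entry[OF sym] by simp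
  have squares_left: "(\<Sum>a\<in>UNIV. \<Sum>b\<in>UNIV. A$a$b * (y$a)^2) = (\<Sum>a\<in>UNIV. (y$a)^2)"
    by (simp add: sum_distrib_right[symmetric] rs)
  have squares_right: "(\<Sum>a\<in>UNIV. \<Sum>b\<in>UNIV. A$a$b * (y$b)^2) = (\<Sum>b\<in>UNIV. (y$b)^2)"
    by (subst sum.swap) (simp add: sum_distrib_right[symmetric] column_sum)
  have cross_term: "(\<Sum>a\<in>UNIV. \<Sum>b\<in>UNIV. A$a$b * (y$a * y$b)) = y \<bullet> (A *v y)"
    by (simp add: inner_vec_def matrix_vector_mult_def sum_distrib_left algebra_simps)
  have "(\<Sum>a\<in>UNIV. \<Sum>b\<in>UNIV. A$a$b * (y$a - y$b)^2)
     = (\<Sum>a\<in>UNIV. \<Sum>b\<in>UNIV. A$a$b * (y$a)^2) - 2 * (\<Sum>a\<in>UNIV. \<Sum>b\<in>UNIV. A$a$b * (y$a * y$b)) + (\<Sum>a\<in>UNIV. \<Sum>b\<in>UNIV. A$a$b * (y$b)^2)"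
    by (simp add: power2_diff algebra_simps sum.distrib sum_subtractf sum_distrib_left)
  then show ?thesis unfolding dirichlet_form_def using squares_left cross_term squares_right by (simp add: norm_squared_components)
qed

lemma dirichlet_form_nonneg: "(\<forall>a b. 0 \<le> A$a$b) \<Longrightarrow> 0 \<le> dirichlet_form A y"
  unfolding dirichlet_form_def by (intro divide_nonneg_pos sum_nonneg mult_nonneg_nonneg) auto

text \<open>One averaging step decreases the squared norm by at least w times the Dirichlet form of A;
  this follows by applying the identity to A ** A, which dominates w A entrywise.\<close>

lemma consensus_contraction:
  fixes A :: "real^'n^'n"
  assumes g: "consensus_matrix w A"
  shows "(norm (A *v y))^2 \<le> (norm y)^2 - w * dirichlet_form A y"
proof -
  have sym: "transpose A = A" and nn: "\<And>a b. 0 \<le> A$a$b" and rs: "\<And>a. (\<Sum>b\<in>UNIV. A$a$b) = 1"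
    and dg: "\<And>a. w \<le> A$a$a" using g by (auto simp: consensus_matrix_def)
  let ?C = "A ** A"
  have symC: "transpose ?C = ?C" using sym by (simp add: matrix_transpose_mul)
  have rsC: "(\<Sum>b\<in>UNIV. ?C$a$b) = 1" for a
  proof -
    have "(\<Sum>b\<in>UNIV. ?C$a$b) = (\<Sum>c\<in>UNIV. A$a$c * (\<Sum>b\<in>UNIV. A$c$b))"
      by (simp add: matrix_matrix_mult_def sum_distrib_left) (rule sum.swap)
    also have "\<dots> = 1" using rs by simp
    finally show ?thesis .
  qed
  have "(norm (A *v y))^2 = (A *v y) \<bullet> (A *v y)" by (simp add: power2_norm_eq_inner)
  also have "\<dots> = y \<bullet> (A *v (A *v y))" using symmetric_inner[OF sym, of y "A *v y"] by simp
  also have "\<dots> = y \<bullet> (?C *v y)" by (simp add: matrix_vector_mul_assoc)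
  also have "\<dots> = (norm y)^2 - dirichlet_form ?C y" using dirichlet_form_identity[OF symC rsC] by simp
  finally have energy: "(norm (A *v y))^2 = (norm y)^2 - dirichlet_form ?C y" .
  have "w * dirichlet_form A y \<le> dirichlet_form ?C y"
  proof -
    have square_dominates: "w * A$a$b \<le> ?C$a$b" for a b
    proof -
      have "w * A$a$b \<le> A$a$a * A$a$b" using dg[of a] nn[of a b] by (simp add: mult_right_mono)
      also have "\<dots> \<le> (\<Sum>c\<in>UNIV. A$a$c * A$c$b)"
        using nn by (intro member_le_sum[where f="\<lambda>c. A$a$c * A$c$b"]) auto
      finally show ?thesis by (simp add: matrix_matrix_mult_def)
    qed
    have "w * dirichlet_form A y = (\<Sum>a\<in>UNIV. \<Sum>b\<in>UNIV. (w * A$a$b) * (y$a - y$b)^2) / 2"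
      by (simp add: dirichlet_form_def sum_distrib_left mult.assoc)
    also have "\<dots> \<le> (\<Sum>a\<in>UNIV. \<Sum>b\<in>UNIV. ?C$a$b * (y$a - y$b)^2) / 2"
      using square_dominates by (intro divide_right_mono sum_mono mult_right_mono) auto
    finally show ?thesis by (simp add: dirichlet_form_def)
  qed
  then show ?thesis using energy by simp
qed

text \<open>An averaging step moves a vector by at most the square root of twice the Dirichlet form
  (Cauchy-Schwarz on every row).\<close>

lemma consensus_step_bound:
  fixes A :: "real^'n^'n"
  assumes g: "consensus_matrix w A"
  shows "(norm (A *v y - y))^2 \<le> 2 * dirichlet_form A y"
proof -
  have nn: "\<And>a b. 0 \<le> A$a$b" and rs: "\<And>a. (\<Sum>b\<in>UNIV. A$a$b) = 1"
    using g by (auto simp: consensus_matrix_def)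
  have row: "((A *v y - y)$a)^2 \<le> (\<Sum>b\<in>UNIV. A$a$b * (y$a - y$b)^2)" for a
  proof -
    have "(A *v y - y)$a = (\<Sum>b\<in>UNIV. A$a$b * (y$b - y$a))"
      using rs[of a] by (simp add: matrix_vector_mult_def right_diff_distrib sum_subtractf sum_distrib_right[symmetric])
    also have "\<dots> = (\<Sum>b\<in>UNIV. sqrt (A$a$b) * (sqrt (A$a$b) * (y$b - y$a)))"
      using nn by (intro sum.cong) (auto simp: mult.assoc[symmetric])
    finally have "((A *v y - y)$a)^2 \<le> (\<Sum>b\<in>UNIV. (sqrt (A$a$b))^2) * (\<Sum>b\<in>UNIV. (sqrt (A$a$b) * (y$b - y$a))^2)"
      using Cauchy_Schwarz_ineq_sum by metis
    also have "\<dots> = (\<Sum>b\<in>UNIV. A$a$b * (y$a - y$b)^2)"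
      using nn rs[of a] by (simp add: power_mult_distrib power2_commute)
    finally show ?thesis .
  qed
  have "(norm (A *v y - y))^2 = (\<Sum>a\<in>UNIV. ((A *v y - y)$a)^2)" by (rule norm_squared_components)
  also have "\<dots> \<le> (\<Sum>a\<in>UNIV. \<Sum>b\<in>UNIV. A$a$b * (y$a - y$b)^2)" by (intro sum_mono row)
  also have "\<dots> = 2 * dirichlet_form A y" by (simp add: dirichlet_form_def)
  finally show ?thesis .
qed

text \<open>An active edge carries weight at least w, so its disagreement is controlled by the form.\<close>

lemma consensus_edge_bound:
  fixes A :: "real^'n^'n"
  assumes g: "consensus_matrix w A" and ab: "a \<noteq> b" "0 < A$a$b"
  shows "w * (y$a - y$b)^2 \<le> 2 * dirichlet_form A y"
proof -
  have nn: "\<And>a b. 0 \<le> A$a$b" and off: "w \<le> A$a$b"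
    using g ab by (auto simp: consensus_matrix_def)
  have "w * (y$a - y$b)^2 \<le> A$a$b * (y$a - y$b)^2" using off by (simp add: mult_right_mono)
  also have "\<dots> \<le> (\<Sum>b'\<in>UNIV. A$a$b' * (y$a - y$b')^2)"
    using nn by (intro member_le_sum[where f="\<lambda>b'. A$a$b' * (y$a - y$b')^2"]) auto
  also have "\<dots> \<le> (\<Sum>a'\<in>UNIV. \<Sum>b'\<in>UNIV. A$a'$b' * (y$a' - y$b')^2)"
    using nn by (intro member_le_sum[where f="\<lambda>a'. \<Sum>b'\<in>UNIV. A$a'$b' * (y$a' - y$b')^2"] sum_nonneg) auto
  also have "\<dots> = 2 * dirichlet_form A y" by (simp add: dirichlet_form_def)
  finally show ?thesis .
qed

lemma consensus_preserves_sum: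
  assumes "consensus_matrix w A"
  shows "(\<Sum>a\<in>UNIV. (A *v z) $ a) = (\<Sum>a\<in>UNIV. z $ a)"
proof -
  have sym: "transpose A = A" and rs: "\<And>a. (\<Sum>b\<in>UNIV. A$a$b) = 1"
    using assms by (auto simp: consensus_matrix_def)
  have cs: "(\<Sum>a\<in>UNIV. A$a$b) = 1" for b using rs[of b] symmetric_entry[OF sym] by simp
  have "(\<Sum>a\<in>UNIV. (A *v z) $ a) = (\<Sum>b\<in>UNIV. (\<Sum>a\<in>UNIV. A$a$b) * z$b)"
    by (simp add: matrix_vector_mult_def sum_distrib_right) (rule sum.swap)
  then show ?thesis using cs by simp
qed

lemma consensus_fixes_constants:
  assumes "consensus_matrix w A"
  shows "A *v (\<chi> a. c) = (\<chi> a. c)"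
  using assms by (simp add: consensus_matrix_def vec_eq_iff matrix_vector_mult_def sum_distrib_right[symmetric])

text \<open>A zero-sum vector whose entries differ by at most D along every edge of a connected graph
  has squared norm at most N^5 D^2 (paths have length at most N^2).\<close>

lemma zero_sum_spread_bound:
  fixes y :: "real^'n" and E :: "('n \<times> 'n) set"
  assumes conn: "\<And>a b. (a, b) \<in> E\<^sup>*" and edge: "\<And>a b. (a, b) \<in> E \<Longrightarrow> \<bar>y$a - y$b\<bar> \<le> D"
    and "0 \<le> D" and sum0: "(\<Sum>a\<in>UNIV. y$a) = 0"
  shows "(norm y)^2 \<le> real CARD('n) ^ 5 * D^2"
proof -
  define N where "N = real CARD('n)"
  have N_pos: "0 < N" by (simp add: N_def)
  have path: "(a, b) \<in> E ^^ n \<Longrightarrow> \<bar>y$a - y$b\<bar> \<le> real n * D" for a b n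
  proof (induction n arbitrary: b)
    case (Suc n)
    then obtain c where "(a, c) \<in> E ^^ n" "(c, b) \<in> E" by auto
    with Suc.IH edge[of c b] show ?case by (force simp: algebra_simps)
  qed simp
  have diff: "\<bar>y$a - y$b\<bar> \<le> N^2 * D" for a b
  proof -
    obtain n where n: "n \<le> card E" "(a, b) \<in> E ^^ n"
      using conn rtrancl_finite_eq_relpow[of E] by fastforce
    have "card E \<le> card (UNIV :: ('n \<times> 'n) set)" by (intro card_mono) auto
    with n(1) have "real n \<le> N^2"
      by (simp add: N_def power2_eq_square flip: UNIV_Times_UNIV of_nat_mult)
    then show ?thesis using path[OF n(2)] \<open>0 \<le> D\<close> by (smt (verit) mult_right_mono)
  qed
  have comp: "\<bar>y$a\<bar> \<le> N^2 * D" for a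
  proof -
    have "N * y$a = (\<Sum>b\<in>UNIV. y$a - y$b)" using sum0 by (simp add: sum_subtractf N_def)
    then have "N * \<bar>y$a\<bar> \<le> (\<Sum>b\<in>UNIV. \<bar>y$a - y$b\<bar>)"
      using N_pos by (metis abs_mult abs_of_pos sum_abs)
    also have "\<dots> \<le> N * (N^2 * D)" using sum_mono[of UNIV, OF diff] by (simp add: N_def)
    finally show ?thesis using N_pos by simp
  qed
  have "(norm y)^2 = (\<Sum>a\<in>UNIV. (y$a)^2)" by (rule norm_squared_components)
  also have "\<dots> \<le> (\<Sum>a\<in>(UNIV::'n set). (N^2 * D)^2)"
    using comp \<open>0 \<le> D\<close> by (intro sum_mono) (metis abs_le_square_iff abs_of_nonneg zero_le_mult_iff zero_le_power2)
  also have "\<dots> = N^5 * D^2" by (simp add: N_def power_mult_distrib power2_eq_square numeral_eq_Suc)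
  finally show ?thesis by (simp add: N_def)
qed

lemma window_energy:
  fixes A :: "nat \<Rightarrow> real^'n^'n" and y :: "nat \<Rightarrow> real^'n"
  assumes g: "\<And>t. t < n \<Longrightarrow> consensus_matrix w (A t)"
    and step: "\<And>t. t < n \<Longrightarrow> y (Suc t) = A t *v y t"
  shows "(norm (y n))^2 \<le> (norm (y 0))^2 - w * (\<Sum>t<n. dirichlet_form (A t) (y t))"
  using assms
proof (induction n)
  case (Suc n)
  have "(norm (y (Suc n)))^2 \<le> (norm (y n))^2 - w * dirichlet_form (A n) (y n)"
    using consensus_contraction[OF Suc.prems(1)] Suc.prems(2) by simp
  with Suc show ?case by (simp add: algebra_simps)
qed simp

lemma window_drift:
  fixes A :: "nat \<Rightarrow> real^'n^'n" and y :: "nat \<Rightarrow> real^'n"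
  assumes g: "\<And>t. t < n \<Longrightarrow> consensus_matrix w (A t)"
    and step: "\<And>t. t < n \<Longrightarrow> y (Suc t) = A t *v y t"
  shows "norm (y n - y 0) \<le> (\<Sum>t<n. sqrt (2 * dirichlet_form (A t) (y t)))"
  using assms
proof (induction n)
  case (Suc n)
  have "(norm (y (Suc n) - y n))^2 \<le> 2 * dirichlet_form (A n) (y n)"
    using consensus_step_bound[OF Suc.prems(1)] Suc.prems(2) by simp
  then have "norm (y (Suc n) - y n) \<le> sqrt (2 * dirichlet_form (A n) (y n))"
    by (simp add: real_le_rsqrt)
  moreover have "norm (y (Suc n) - y 0) \<le> norm (y (Suc n) - y n) + norm (y n - y 0)"
    by (rule order_trans[OF _ norm_triangle_ineq]) simp
  ultimately show ?case using Suc by simp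
qed simp

text \<open>The contraction constant of one connected window of length B.\<close>

definition window_rate :: "real \<Rightarrow> nat \<Rightarrow> real \<Rightarrow> real" where
  "window_rate w B N = 2 * real B * N^5 * (1 / sqrt w + 2)^2 / w + 2"

lemma window_rate_ge_two:
  assumes "0 < w" and "0 \<le> N"
  shows "2 \<le> window_rate w B N"
  unfolding window_rate_def using assms by (simp add: divide_nonneg_pos)

text \<open>Along an edge active at some time of the window, the initial vector varies by at most
  a multiple of the total step size, since the vector moves little and the edge is heavy.\<close>

lemma window_edge_variation:
  fixes A :: "nat \<Rightarrow> real^'n^'n" and y :: "nat \<Rightarrow> real^'n"
  assumes g: "\<And>t. t < B \<Longrightarrow> consensus_matrix w (A t)" and w: "0 < w"
    and step: "\<And>t. t < B \<Longrightarrow> y (Suc t) = A t *v y t"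
    and t: "t < B" "a \<noteq> b" "0 < A t $ a $ b"
  shows "\<bar>y 0 $ a - y 0 $ b\<bar> \<le> (1 / sqrt w + 2) * (\<Sum>t<B. sqrt (2 * dirichlet_form (A t) (y t)))"
proof -
  define Q where "Q t = dirichlet_form (A t) (y t)" for t
  define R where "R = (\<Sum>t<B. sqrt (2 * Q t))"
  have Q_nonneg: "0 \<le> Q t" if "t < B" for t
    using g[OF that] unfolding Q_def consensus_matrix_def by (intro dirichlet_form_nonneg) auto
  have "w * (y t $ a - y t $ b)^2 \<le> 2 * Q t"
    using consensus_edge_bound[OF g[OF t(1)] t(2,3)] by (simp add: Q_def)
  then have "(y t $ a - y t $ b)^2 \<le> 2 * Q t / w" using w by (simp add: field_simps)
  then have "\<bar>y t $ a - y t $ b\<bar> \<le> sqrt (2 * Q t / w)" by (simp add: real_le_rsqrt)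
  also have "\<dots> = sqrt (2 * Q t) / sqrt w" by (simp add: real_sqrt_divide)
  also have "sqrt (2 * Q t) \<le> R"
    unfolding R_def using t(1) Q_nonneg by (intro member_le_sum[where f = "\<lambda>t. sqrt (2 * Q t)"]) auto
  finally have near: "\<bar>y t $ a - y t $ b\<bar> \<le> R / sqrt w" using w by (simp add: divide_right_mono)
  have "norm (y t - y 0) \<le> (\<Sum>t'<t. sqrt (2 * Q t'))"
    unfolding Q_def using t(1) by (intro window_drift[of t w A y] g step) auto
  also have "\<dots> \<le> R"
    unfolding R_def using t(1) Q_nonneg by (intro sum_mono2) auto
  finally have "norm (y t - y 0) \<le> R" .
  then have "\<bar>(y t - y 0) $ a\<bar> \<le> R" "\<bar>(y t - y 0) $ b\<bar> \<le> R"
    using component_le_norm_cart order_trans by blast+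
  then show ?thesis using near by (simp add: R_def Q_def algebra_simps)
qed

lemma window_contraction:
  fixes A :: "nat \<Rightarrow> real^'n^'n" and y :: "nat \<Rightarrow> real^'n"
  assumes g: "\<And>t. t < B \<Longrightarrow> consensus_matrix w (A t)" and w: "0 < w"
    and step: "\<And>t. t < B \<Longrightarrow> y (Suc t) = A t *v y t"
    and sum0: "(\<Sum>a\<in>UNIV. y 0 $ a) = 0"
    and conn: "\<And>a b. (a, b) \<in> {(a, b). a \<noteq> b \<and> (\<exists>t<B. 0 < A t $ a $ b)}\<^sup>*"
  shows "(norm (y B))^2 \<le> (1 - 1 / window_rate w B (real CARD('n))) * (norm (y 0))^2"
proof -
  define N where "N = real CARD('n)"
  define Q where "Q t = dirichlet_form (A t) (y t)" for t
  define R where "R = (\<Sum>t<B. sqrt (2 * Q t))"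
  define K where "K = 1 / sqrt w + 2"
  define \<Delta> where "\<Delta> = (norm (y 0))^2 - (norm (y B))^2"
  have Q_nonneg: "0 \<le> Q t" if "t < B" for t
    using g[OF that] unfolding Q_def consensus_matrix_def by (intro dirichlet_form_nonneg) auto
  have R_nonneg: "0 \<le> R" unfolding R_def using Q_nonneg by (intro sum_nonneg) auto
  have energy: "w * (\<Sum>t<B. Q t) \<le> \<Delta>"
    using window_energy[of B w A y] g step by (simp add: \<Delta>_def Q_def)
  have R_sq: "R^2 \<le> 2 * real B * (\<Sum>t<B. Q t)"
  proof -
    have "R^2 \<le> (\<Sum>t<B. 1^2) * (\<Sum>t<B. (sqrt (2 * Q t))^2)"
      unfolding R_def using Cauchy_Schwarz_ineq_sum[of "\<lambda>_. 1" "\<lambda>t. sqrt (2 * Q t)" "{..<B}"] by simp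
    also have "(\<Sum>t<B. (sqrt (2 * Q t))^2) = (\<Sum>t<B. 2 * Q t)"
      using Q_nonneg by (intro sum.cong) auto
    finally show ?thesis by (simp add: sum_distrib_left algebra_simps)
  qed
  have edge: "\<bar>y 0 $ a - y 0 $ b\<bar> \<le> K * R"
    if ab: "(a, b) \<in> {(a, b). a \<noteq> b \<and> (\<exists>t<B. 0 < A t $ a $ b)}" for a b
  proof -
    obtain t where "t < B" "a \<noteq> b" "0 < A t $ a $ b" using ab by auto
    from window_edge_variation[of B w A y, OF g w step this] show ?thesis
      unfolding K_def R_def Q_def by blast
  qed
  have "0 \<le> w * (\<Sum>t<B. Q t)" using w Q_nonneg by (intro mult_nonneg_nonneg sum_nonneg) auto
  with energy have \<Delta>_nonneg: "0 \<le> \<Delta>" by linarith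
  have "(\<Sum>t<B. Q t) \<le> \<Delta> / w" using energy w by (simp add: le_divide_eq mult.commute)
  with R_sq have "R^2 \<le> 2 * real B * (\<Delta> / w)" by (smt (verit) mult_left_mono of_nat_0_le_iff)
  have "(norm (y 0))^2 \<le> N^5 * (K * R)^2"
    unfolding N_def using K_def R_nonneg w
    by (intro zero_sum_spread_bound[OF conn edge _ sum0]) auto
  also have "\<dots> = N^5 * K^2 * R^2" by (simp add: power_mult_distrib)
  also have "\<dots> \<le> N^5 * K^2 * (2 * real B * (\<Delta> / w))"
    using \<open>R^2 \<le> 2 * real B * (\<Delta> / w)\<close> by (intro mult_left_mono) (auto simp: N_def)
  also have "\<dots> = (window_rate w B N - 2) * \<Delta>"
    by (simp add: window_rate_def K_def)
  also have "\<dots> \<le> window_rate w B N * \<Delta>" using \<Delta>_nonneg by (simp add: algebra_simps)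
  finally have "(norm (y 0))^2 \<le> window_rate w B N * \<Delta>" .
  moreover have "0 < window_rate w B N" using window_rate_ge_two[OF w, of N B] by (simp add: N_def)
  ultimately have "(norm (y 0))^2 / window_rate w B N \<le> \<Delta>" by (simp add: divide_le_eq mult.commute)
  then show ?thesis by (simp add: \<Delta>_def N_def algebra_simps)
qed

section \<open>Transition products of a jointly connected network\<close>

fun transition :: "(nat \<Rightarrow> real^'n^'n) \<Rightarrow> nat \<Rightarrow> nat \<Rightarrow> real^'n^'n" where
  "transition W j 0 = mat 1"
| "transition W j (Suc n) = W (j + n) ** transition W j n"

lemma transition_Suc_right: "transition W j (Suc n) = transition W (Suc j) n ** W j"
proof (induction n arbitrary: j)
  case (Suc n)
  have "transition W j (Suc (Suc n)) = W (j + Suc n) ** (transition W (Suc j) n ** W j)"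
    using Suc by simp
  also have "\<dots> = (W (Suc j + n) ** transition W (Suc j) n) ** W j" by (simp add: matrix_mul_assoc)
  finally show ?case by simp
qed simp

lemma rcons_transition:
  fixes W :: "nat \<Rightarrow> real^'n^'n" and e :: "nat \<Rightarrow> real^'n"
  assumes "k \<ge> 1"
  shows "rcons W e k = (real CARD('n) / real k) *\<^sub>R (\<Sum>j\<in>{1..k}. transition W j (k - j) *v e j)"
  using assms
proof (induction k rule: nat_induct_at_least)
  case (Suc k)
  then obtain k' where k': "k = Suc k'" by (cases k) auto
  let ?N = "real CARD('n)"
  have "W k *v (\<Sum>j\<in>{1..k}. transition W j (k - j) *v e j) = (\<Sum>j\<in>{1..k}. transition W j (Suc k - j) *v e j)"
    unfolding linear_sum[OF matrix_vector_mul_linear]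
    by (intro sum.cong) (auto simp: matrix_vector_mul_assoc Suc_diff_le)
  then have "rcons W e (Suc k) = (?N / real (Suc k)) *\<^sub>R (\<Sum>j\<in>{1..k}. transition W j (Suc k - j) *v e j)
      + (?N / real (Suc k)) *\<^sub>R e (Suc k)"
    using k' Suc.IH Suc.hyps by (simp add: matrix_vector_mult_scaleR)
  then show ?case by (simp add: scaleR_add_right)
qed simp

lemma sum_reverse_index: "(\<Sum>j\<in>{1..k}. f (k - j)) = (\<Sum>n<k. f n)" for f :: "nat \<Rightarrow> real"
  by (rule sum.reindex_bij_witness[of _ "\<lambda>n. k - n" "\<lambda>j. k - j"]) auto

lemma blockwise_geometric_bounded:
  fixes \<tau> :: real and B :: nat
  assumes \<tau>: "0 < \<tau>" "\<tau> < 1" and B: "B \<ge> 1"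
  shows "\<exists>K. \<forall>k. (\<Sum>n<k. \<tau> ^ ((n - 1) div B)) \<le> K"
proof -
  define q where "q = \<tau> powr (1 / real B)"
  have q0: "0 < q" using \<tau> by (simp add: q_def)
  have q1: "q < 1" unfolding q_def powr_def using \<tau> B
    by (simp add: ln_less_zero mult_neg_pos divide_neg_pos)
  have term_bound: "\<tau> ^ ((n - 1) div B) \<le> q ^ n / \<tau>" for n
  proof -
    define m where "m = (n - 1) div B"
    have "n - 1 = B * m + (n - 1) mod B" by (simp add: m_def)
    moreover have "(n - 1) mod B < B" using B by simp
    ultimately have "n \<le> B * m + B" by linarith
    then have "real n \<le> real B * real m + real B" by (metis of_nat_add of_nat_le_iff of_nat_mult)
    then have "real n / real B - 1 \<le> real m" using B by (simp add: field_simps)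
    then have "\<tau> ^ m \<le> \<tau> powr (real n / real B - 1)"
      using \<tau> by (simp add: powr_realpow[symmetric] powr_mono')
    also have "\<dots> = q ^ n / \<tau>"
      using \<tau> q0 by (simp add: q_def powr_diff powr_powr powr_realpow[symmetric])
    finally show ?thesis by (simp add: m_def)
  qed
  have "(\<Sum>n<k. \<tau> ^ ((n - 1) div B)) \<le> 1 / (\<tau> * (1 - q))" for k
  proof -
    have "(\<Sum>n<k. \<tau> ^ ((n - 1) div B)) \<le> (\<Sum>n<k. q ^ n / \<tau>)" by (intro sum_mono term_bound)
    also have "\<dots> = (1 - q ^ k) / (1 - q) / \<tau>" using q1 by (simp add: sum_divide_distrib[symmetric] sum_gp_strict)
    also have "\<dots> \<le> 1 / (1 - q) / \<tau>" using q0 q1 \<tau> by (intro divide_right_mono) (auto simp: field_simps)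
    finally show ?thesis by (simp add: mult.commute)
  qed
  then show ?thesis by blast
qed

lemma matrix_mult_row: "(A ** B) $ i = transpose B *v (A $ i)" for A B :: "real^'n^'n"
  by (simp add: vec_eq_iff matrix_matrix_mult_def matrix_vector_mult_def transpose_def mult.commute)

locale consensus_network =
  fixes W :: "nat \<Rightarrow> real^'n^'n" and w :: real and B :: nat
  assumes consensus: "\<And>k. k \<ge> 1 \<Longrightarrow> consensus_matrix w (W k)"
    and w_pos: "0 < w" and B_pos: "1 \<le> B"
    and connected: "\<And>k a b. k \<ge> 1 \<Longrightarrow>
       (a, b) \<in> {(a, b). a \<noteq> b \<and> (\<exists>l\<in>{k+1..k+B}. 0 < W l $ a $ b)}\<^sup>*"
begin

definition uniform :: "real^'n" where
  "uniform = (\<chi> a. 1 / real CARD('n))"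

definition deviation :: "'n \<Rightarrow> nat \<Rightarrow> nat \<Rightarrow> real^'n" where
  "deviation i j n = transition W j n $ i - uniform"

definition \<rho> :: real where
  "\<rho> = 1 - 1 / window_rate w B (real CARD('n))"

text \<open>By symmetry, rows of the transition products evolve by one more averaging step.\<close>

lemma row_Suc: "j \<ge> 1 \<Longrightarrow> transition W j (Suc n) $ i = W j *v (transition W (Suc j) n $ i)"
  unfolding transition_Suc_right matrix_mult_row using consensus[of j] by (simp add: consensus_matrix_def)

lemma row_sum: "j \<ge> 1 \<Longrightarrow> (\<Sum>a\<in>UNIV. transition W j n $ i $ a) = 1"
proof (induction n arbitrary: j)
  case 0
  then show ?case by (simp add: mat_def)
next
  case (Suc n)
  then show ?case using row_Suc consensus_preserves_sum[OF consensus] by simp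
qed

lemma deviation_sum: "j \<ge> 1 \<Longrightarrow> (\<Sum>a\<in>UNIV. deviation i j n $ a) = 0"
  using row_sum by (simp add: deviation_def uniform_def sum_subtractf)

lemma deviation_Suc: "j \<ge> 1 \<Longrightarrow> deviation i j (Suc n) = W j *v deviation i (Suc j) n"
  using row_Suc consensus_fixes_constants[OF consensus]
  by (simp add: deviation_def uniform_def matrix_vector_mult_diff_distrib)

lemma deviation_mono: "j \<ge> 1 \<Longrightarrow> (norm (deviation i j (Suc n)))^2 \<le> (norm (deviation i (Suc j) n))^2"
proof -
  assume j: "j \<ge> 1"
  have "0 \<le> w * dirichlet_form (W j) (deviation i (Suc j) n)"
    using consensus[OF j] w_pos by (intro mult_nonneg_nonneg dirichlet_form_nonneg) (auto simp: consensus_matrix_def)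
  then show ?thesis
    unfolding deviation_Suc[OF j]
    using consensus_contraction[OF consensus[OF j], of "deviation i (Suc j) n"] by linarith
qed

lemma deviation_initial: "(norm (deviation i j 0))^2 \<le> 1"
proof -
  let ?N = "real CARD('n)"
  have "(norm (deviation i j 0))^2 = (\<Sum>a\<in>UNIV. (axis i 1 $ a - 1 / ?N)^2)"
    by (auto simp: norm_squared_components deviation_def uniform_def mat_def axis_def intro!: sum.cong)
  also have "\<dots> = (\<Sum>a\<in>UNIV. (axis i 1 $ a)^2) - 2 / ?N * (\<Sum>a\<in>UNIV. axis i (1::real) $ a) + ?N * (1/?N)^2"
    by (simp add: power2_diff sum.distrib sum_subtractf sum_distrib_left sum_divide_distrib algebra_simps)
  also have "(\<Sum>a\<in>UNIV. (axis i (1::real) $ a)^2) = (\<Sum>a\<in>UNIV. axis i (1::real) $ a)"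
    by (intro sum.cong) (auto simp: axis_def)
  finally have "(norm (deviation i j 0))^2 = 1 - 1 / ?N" by (simp add: axis_def power2_eq_square field_simps)
  then show ?thesis by simp
qed

lemma deviation_le_one: "j \<ge> 1 \<Longrightarrow> (norm (deviation i j n))^2 \<le> 1"
proof (induction n arbitrary: j)
  case (Suc n)
  have "(norm (deviation i (Suc j) n))^2 \<le> 1" by (rule Suc.IH) simp
  with deviation_mono[OF Suc.prems, of i n] show ?case by linarith
qed (rule deviation_initial)

lemma rho_bounds: "1/2 \<le> \<rho>" "\<rho> < 1"
  using window_rate_ge_two[OF w_pos, of "real CARD('n)" B] unfolding \<rho>_def by (auto simp: field_simps)

lemma deviation_window:
  assumes j: "j \<ge> 2"
  shows "(norm (deviation i j (n + B)))^2 \<le> \<rho> * (norm (deviation i (j + B) n))^2"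
proof -
  define y where "y t = deviation i (j + B - t) (n + t)" for t
  define A where "A t = W (j + B - Suc t)" for t
  have "(norm (y B))^2 \<le> (1 - 1 / window_rate w B (real CARD('n))) * (norm (y 0))^2"
  proof (rule window_contraction)
    show "consensus_matrix w (A t)" if "t < B" for t
      unfolding A_def using that j by (intro consensus) auto
    show "y (Suc t) = A t *v y t" if "t < B" for t
    proof -
      have "Suc (j + B - Suc t) = j + B - t" using that by simp
      then show ?thesis
        using deviation_Suc[of "j + B - Suc t" i "n + t"] that j by (simp add: A_def y_def)
    qed
    show "(\<Sum>a\<in>UNIV. y 0 $ a) = 0" unfolding y_def using j by (intro deviation_sum) auto
    show "(a, b) \<in> {(a, b). a \<noteq> b \<and> (\<exists>t<B. 0 < A t $ a $ b)}\<^sup>*" for a b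
    proof -
      have sub: "{(a, b). a \<noteq> b \<and> (\<exists>l\<in>{(j-1)+1..(j-1)+B}. 0 < W l $ a $ b)}
          \<subseteq> {(a, b). a \<noteq> b \<and> (\<exists>t<B. 0 < A t $ a $ b)}"
      proof clarify
        fix a b l assume ab: "a \<noteq> b" "l \<in> {(j-1)+1..(j-1)+B}" "0 < W l $ a $ b"
        have "j + B - 1 - l < B" "j + B - Suc (j + B - 1 - l) = l" using ab(2) j B_pos by auto
        then show "\<exists>t<B. 0 < A t $ a $ b" using ab(3) unfolding A_def by metis
      qed
      have "(a, b) \<in> {(a, b). a \<noteq> b \<and> (\<exists>l\<in>{(j-1)+1..(j-1)+B}. 0 < W l $ a $ b)}\<^sup>*"
        using connected[of "j - 1" a b] j by simp
      then show ?thesis using rtrancl_mono[OF sub] by blast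
    qed
  qed (use w_pos in simp)
  then show ?thesis by (simp add: y_def \<rho>_def)
qed

lemma deviation_decay_from_two: "j \<ge> 2 \<Longrightarrow> (norm (deviation i j n))^2 \<le> \<rho> ^ (n div B)"
proof (induction n arbitrary: j rule: less_induct)
  case (less n)
  show ?case
  proof (cases "n < B")
    case True
    then show ?thesis using deviation_le_one[of j i n] less.prems by simp
  next
    case False
    then obtain n' where n': "n = n' + B" by (metis add.commute le_add_diff_inverse not_less)
    then have "n' < n" using B_pos by simp
    have "(norm (deviation i j n))^2 \<le> \<rho> * (norm (deviation i (j + B) n'))^2"
      using deviation_window[OF less.prems] n' by simp
    also have "\<dots> \<le> \<rho> * \<rho> ^ (n' div B)"
      using less.IH[OF \<open>n' < n\<close>, of "j + B"] less.prems rho_bounds by (intro mult_left_mono) auto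
    also have "\<dots> = \<rho> ^ (n div B)" using n' B_pos by simp
    finally show ?thesis .
  qed
qed

lemma deviation_decay: "j \<ge> 1 \<Longrightarrow> (norm (deviation i j n))^2 \<le> \<rho> ^ ((n - 1) div B)"
proof -
  assume j: "j \<ge> 1"
  show ?thesis
  proof (cases "j \<ge> 2")
    case True
    have "\<rho> ^ (n div B) \<le> \<rho> ^ ((n - 1) div B)"
      using rho_bounds by (intro power_decreasing div_le_mono) auto
    then show ?thesis using deviation_decay_from_two[OF True, of i n] by simp
  next
    case False
    then have "j = 1" using j by simp
    show ?thesis
    proof (cases n)
      case 0
      then show ?thesis using deviation_le_one[OF j] by simp
    next
      case (Suc n')
      have "(norm (deviation i j n))^2 \<le> (norm (deviation i 2 n'))^2"
        using deviation_mono[of 1 i n'] \<open>j = 1\<close> Suc by (simp add: numeral_2_eq_2)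
      also have "\<dots> \<le> \<rho> ^ (n' div B)" by (rule deviation_decay_from_two) simp
      finally show ?thesis using Suc by simp
    qed
  qed
qed

lemma deviation_sum_bounded: "\<exists>K. \<forall>k. (\<Sum>j\<in>{1..k}. norm (deviation i j (k - j))) \<le> K"
proof -
  define \<tau> where "\<tau> = sqrt \<rho>"
  have \<tau>: "0 < \<tau>" "\<tau> < 1" using rho_bounds by (auto simp: \<tau>_def)
  obtain K where K: "\<And>k. (\<Sum>n<k. \<tau> ^ ((n - 1) div B)) \<le> K"
    using blockwise_geometric_bounded[OF \<tau> B_pos] by blast
  have norm_decay: "norm (deviation i j n) \<le> \<tau> ^ ((n - 1) div B)" if "j \<ge> 1" for j n
  proof -
    have "norm (deviation i j n) = sqrt ((norm (deviation i j n))^2)" by simp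
    also have "\<dots> \<le> sqrt (\<rho> ^ ((n - 1) div B))"
      using deviation_decay[OF that] by (simp only: real_sqrt_le_mono)
    finally show ?thesis by (simp add: \<tau>_def real_sqrt_power)
  qed
  have "(\<Sum>j\<in>{1..k}. norm (deviation i j (k - j))) \<le> K" for k
  proof -
    have "(\<Sum>j\<in>{1..k}. norm (deviation i j (k - j))) \<le> (\<Sum>j\<in>{1..k}. \<tau> ^ ((k - j - 1) div B))"
      by (intro sum_mono norm_decay) auto
    also have "\<dots> = (\<Sum>n<k. \<tau> ^ ((n - 1) div B))"
      using sum_reverse_index[of "\<lambda>n. \<tau> ^ ((n - 1) div B)" k] by simp
    finally show ?thesis using K[of k] by simp
  qed
  then show ?thesis by blast
qed

end

section \<open>The node statistic of running consensus detection\<close>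

lemma limit_by_rate:
  fixes f :: "nat \<Rightarrow> real"
  assumes "\<And>k. k \<ge> 1 \<Longrightarrow> \<bar>f k - L\<bar> \<le> C / real k"
  shows "f \<longlonglongrightarrow> L"
proof -
  have "(\<lambda>k. C / real k) \<longlonglongrightarrow> 0"
    by (rule tendsto_divide_0[OF tendsto_const filterlim_at_top_imp_at_infinity[OF filterlim_real_sequentially]])
  moreover have "eventually (\<lambda>k. norm (f k - L) \<le> C / real k) sequentially"
    using assms by (auto simp: eventually_sequentially)
  ultimately have "(\<lambda>k. f k - L) \<longlonglongrightarrow> 0" by (rule Lim_null_comparison[rotated])
  then show ?thesis by (rule LIM_zero_cancel)
qed

locale running_consensus_detection = consensus_network W Wmin B
  for W :: "nat \<Rightarrow> real^'n^'n" and Wmin :: real and B :: nat +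
  fixes M :: "'w measure" and \<zeta> :: "nat \<Rightarrow> 'w \<Rightarrow> real^'n"
    and S :: "real^'n^'n" and m0 m1 :: "real^'n" and l :: nat and i :: 'n
  assumes prob: "prob_space M"
    and S_pd: "pos_def_mat S"
    and m_ne: "m0 \<noteq> m1"
    and indep: "prob_space.indep_vars M (\<lambda>_. borel) \<zeta> {1..}"
    and gauss: "\<And>k. k \<ge> 1 \<Longrightarrow> distributed M lborel (\<zeta> k) (\<lambda>x. ennreal (gauss_density S x))"
    and hypothesis: "l \<in> {0, 1}"
begin

definition llr_weight :: "real^'n" where
  "llr_weight = matrix_inv S *v (m1 - m0)"

definition true_mean :: "real^'n" where
  "true_mean = (if l = 0 then m0 else m1)"

definition local_mean :: "real^'n" where
  "local_mean = (\<chi> a. llr_weight $ a * (true_mean $ a - (m1 $ a + m0 $ a) / 2))"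

definition node_row :: "nat \<Rightarrow> nat \<Rightarrow> real^'n" where
  "node_row j n = transition W j n $ i"

definition stat_mean :: "nat \<Rightarrow> real" where
  "stat_mean k = real CARD('n) / real k * (\<Sum>j\<in>{1..k}. node_row j (k - j) \<bullet> local_mean)"

definition stat_coeff :: "nat \<Rightarrow> nat \<Rightarrow> real^'n" where
  "stat_coeff k j = (real CARD('n) / real k) *\<^sub>R (\<chi> a. node_row j (k - j) $ a * llr_weight $ a)"

definition stat_variance :: "nat \<Rightarrow> real" where
  "stat_variance k = (\<Sum>j\<in>{1..k}. stat_coeff k j \<bullet> (S *v stat_coeff k j))"

definition stat :: "nat \<Rightarrow> 'w \<Rightarrow> real" where
  "stat k \<omega> = rcons W (\<lambda>j. eta_vec S m0 m1 (true_mean + \<zeta> j \<omega>)) k $ i"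

definition \<sigma>2 :: real where
  "\<sigma>2 = (m1 - m0) \<bullet> (matrix_inv S *v (m1 - m0))"

definition mL :: real where
  "mL = (-1) ^ (l + 1) / 2 * \<sigma>2"

lemma eta_row:
  fixes P :: "real^'n^'n"
  shows "(P *v eta_vec S m0 m1 (true_mean + z)) $ i = P $ i \<bullet> local_mean + (\<chi> a. P $ i $ a * llr_weight $ a) \<bullet> z"
  unfolding matrix_vector_mult_def eta_vec_def inner_vec_def local_mean_def llr_weight_def
  by (simp add: sum.distrib[symmetric] algebra_simps)

lemma stat_repr: "k \<ge> 1 \<Longrightarrow> stat k \<omega> = stat_mean k + (\<Sum>j\<in>{1..k}. stat_coeff k j \<bullet> \<zeta> j \<omega>)"
proof -
  assume k: "k \<ge> 1"
  have "stat k \<omega> = real CARD('n) / real k * (\<Sum>j\<in>{1..k}. (transition W j (k - j) *v eta_vec S m0 m1 (true_mean + \<zeta> j \<omega>)) $ i)"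
    unfolding stat_def rcons_transition[OF k] by simp
  also have "\<dots> = real CARD('n) / real k * (\<Sum>j\<in>{1..k}. node_row j (k - j) \<bullet> local_mean + (\<chi> a. node_row j (k - j) $ a * llr_weight $ a) \<bullet> \<zeta> j \<omega>)"
    unfolding eta_row node_row_def by simp
  also have "\<dots> = stat_mean k + (\<Sum>j\<in>{1..k}. stat_coeff k j \<bullet> \<zeta> j \<omega>)"
    unfolding stat_mean_def stat_coeff_def by (simp add: sum.distrib distrib_left sum_distrib_left)
  finally show ?thesis .
qed

lemma stat_measurable: "stat k \<in> borel_measurable M"
proof (cases "k \<ge> 1")
  case True
  have "\<zeta> j \<in> borel_measurable M" if "j \<ge> 1" for j
    using distributed_measurable[OF gauss[OF that]] by simp
  then have "(\<lambda>\<omega>. stat_mean k + (\<Sum>j\<in>{1..k}. stat_coeff k j \<bullet> \<zeta> j \<omega>)) \<in> borel_measurable M"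
    by (intro borel_measurable_add borel_measurable_const borel_measurable_sum) auto
  moreover have "stat k = (\<lambda>\<omega>. stat_mean k + (\<Sum>j\<in>{1..k}. stat_coeff k j \<bullet> \<zeta> j \<omega>))"
    using stat_repr[OF True] by (intro ext) simp
  ultimately show ?thesis by simp
next
  case False
  then have "k = 0" by simp
  then show ?thesis by (simp add: stat_def[abs_def])
qed

lemma stat_mgf:
  assumes k: "k \<ge> 1"
  shows "integrable M (\<lambda>\<omega>. exp (c * stat k \<omega>))"
    and "(\<integral>\<omega>. exp (c * stat k \<omega>) \<partial>M) = exp (c * stat_mean k + c\<^sup>2 * stat_variance k / 2)"
proof -
  have eq: "exp (c * stat k \<omega>) = exp (c * stat_mean k) * (\<Prod>j\<in>{1..k}. exp ((c *\<^sub>R stat_coeff k j) \<bullet> \<zeta> j \<omega>))" for \<omega>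
    unfolding stat_repr[OF k] by (simp add: distrib_left sum_distrib_left exp_add exp_sum)
  note joint = indep_gauss_mgf[OF prob S_pd indep gauss, of "{1..k}" "\<lambda>j. c *\<^sub>R stat_coeff k j"]
  show "integrable M (\<lambda>\<omega>. exp (c * stat k \<omega>))"
    unfolding eq using joint(1) by (intro integrable_mult_right) auto
  have "(\<integral>\<omega>. exp (c * stat k \<omega>) \<partial>M)
      = exp (c * stat_mean k) * (\<Prod>j\<in>{1..k}. exp ((c *\<^sub>R stat_coeff k j) \<bullet> (S *v (c *\<^sub>R stat_coeff k j)) / 2))"
    unfolding eq using joint(2) by auto
  also have "\<dots> = exp (c * stat_mean k + c\<^sup>2 * stat_variance k / 2)"
    unfolding stat_variance_def
    by (simp add: exp_add exp_sum[symmetric] sum_divide_distrib sum_distrib_left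
        power2_eq_square algebra_simps)
  finally show "(\<integral>\<omega>. exp (c * stat k \<omega>) \<partial>M) = exp (c * stat_mean k + c\<^sup>2 * stat_variance k / 2)" .
qed

lemma node_row_split: "node_row j n = uniform + deviation i j n"
  by (simp add: node_row_def deviation_def)

lemma llr_weight_sigma: "llr_weight \<bullet> (m1 - m0) = \<sigma>2" "llr_weight \<bullet> (S *v llr_weight) = \<sigma>2"
  using pos_def_mat_inverse_apply[OF S_pd] by (simp_all add: llr_weight_def \<sigma>2_def inner_commute)

lemma sigma_pos: "0 < \<sigma>2"
proof -
  have "S *v llr_weight = m1 - m0"
    using pos_def_mat_inverse_apply[OF S_pd] by (simp add: llr_weight_def)
  then have "llr_weight \<noteq> 0" using m_ne by auto
  then have "0 < llr_weight \<bullet> (S *v llr_weight)" using S_pd by (simp add: pos_def_mat_def)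
  then show ?thesis using llr_weight_sigma by simp
qed

lemma sum_local_mean: "(\<Sum>a\<in>UNIV. local_mean $ a) = mL"
proof -
  have "(\<Sum>a\<in>UNIV. local_mean $ a) = (if l = 0 then - 1/2 else 1/2) * (llr_weight \<bullet> (m1 - m0))"
    using hypothesis
    by (auto simp: local_mean_def true_mean_def inner_vec_def sum_distrib_left algebra_simps
        sum_divide_distrib[symmetric] intro!: sum.cong)
  then show ?thesis using hypothesis llr_weight_sigma by (auto simp: mL_def)
qed

text \<open>The mean of the node statistic tends to the centralized mean, since the deviations of the
  rows from uniform are summable.\<close>

lemma stat_mean_lim: "stat_mean \<longlonglongrightarrow> mL"
proof -
  let ?N = "real CARD('n)"
  obtain K where K: "\<And>k. (\<Sum>j\<in>{1..k}. norm (deviation i j (k - j))) \<le> K"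
    using deviation_sum_bounded by blast
  have uniform_mean: "uniform \<bullet> local_mean = mL / ?N"
    using sum_local_mean by (simp add: uniform_def inner_vec_def sum_divide_distrib[symmetric])
  show ?thesis
  proof (rule limit_by_rate[where C = "?N * norm local_mean * K"])
    fix k :: nat assume k: "k \<ge> 1"
    have "stat_mean k = ?N / real k * (\<Sum>j\<in>{1..k}. deviation i j (k - j) \<bullet> local_mean + uniform \<bullet> local_mean)"
      unfolding stat_mean_def node_row_split by (simp add: inner_add_left add.commute)
    also have "\<dots> = ?N / real k * (\<Sum>j\<in>{1..k}. deviation i j (k - j) \<bullet> local_mean) + mL"
      using k uniform_mean by (simp add: sum.distrib field_simps)
    finally have e: "stat_mean k - mL = ?N / real k * (\<Sum>j\<in>{1..k}. deviation i j (k - j) \<bullet> local_mean)" by simp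
    have "\<bar>\<Sum>j\<in>{1..k}. deviation i j (k - j) \<bullet> local_mean\<bar> \<le> (\<Sum>j\<in>{1..k}. norm (deviation i j (k - j)) * norm local_mean)"
      by (rule order_trans[OF sum_abs sum_mono]) (rule Cauchy_Schwarz_ineq2)
    also have "\<dots> = norm local_mean * (\<Sum>j\<in>{1..k}. norm (deviation i j (k - j)))"
      by (simp add: sum_distrib_left mult.commute)
    also have "\<dots> \<le> norm local_mean * K" using K by (intro mult_left_mono) auto
    finally have "\<bar>stat_mean k - mL\<bar> \<le> ?N / real k * (norm local_mean * K)"
      unfolding e abs_mult using k by (intro mult_mono) auto
    then show "\<bar>stat_mean k - mL\<bar> \<le> ?N * norm local_mean * K / real k" by simp
  qed
qed

definition weighted_form :: "real^'n \<Rightarrow> real^'n \<Rightarrow> real" where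
  "weighted_form x y = (\<Sum>a\<in>UNIV. \<Sum>b\<in>UNIV. x$a * llr_weight$a * S$a$b * llr_weight$b * y$b)"

lemma stat_coeff_form:
  "stat_coeff k j \<bullet> (S *v stat_coeff k j)
    = (real CARD('n) / real k)^2 * weighted_form (node_row j (k - j)) (node_row j (k - j))"
  unfolding stat_coeff_def weighted_form_def
  by (simp add: inner_vec_def matrix_vector_mult_def sum_distrib_left power2_eq_square algebra_simps)

lemma weighted_form_expand:
  "weighted_form (u + d) (u + d) = weighted_form u u + weighted_form u d + weighted_form d u + weighted_form d d"
  unfolding weighted_form_def by (simp add: algebra_simps sum.distrib)

definition weight_norm :: real where
  "weight_norm = (\<Sum>a\<in>UNIV. \<Sum>b\<in>UNIV. \<bar>llr_weight$a * S$a$b * llr_weight$b\<bar>)"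

lemma weighted_form_bound: "\<bar>weighted_form x y\<bar> \<le> weight_norm * norm x * norm y"
proof -
  have "\<bar>weighted_form x y\<bar> \<le> (\<Sum>a\<in>UNIV. \<Sum>b\<in>UNIV. \<bar>x$a * llr_weight$a * S$a$b * llr_weight$b * y$b\<bar>)"
    unfolding weighted_form_def by (rule order_trans[OF sum_abs sum_mono]) (rule sum_abs)
  also have "\<dots> \<le> (\<Sum>a\<in>UNIV. \<Sum>b\<in>UNIV. \<bar>llr_weight$a * S$a$b * llr_weight$b\<bar> * (norm x * norm y))"
  proof (intro sum_mono)
    fix a b
    have "\<bar>x$a * llr_weight$a * S$a$b * llr_weight$b * y$b\<bar> = \<bar>llr_weight$a * S$a$b * llr_weight$b\<bar> * (\<bar>x$a\<bar> * \<bar>y$b\<bar>)"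
      by (simp add: abs_mult)
    also have "\<dots> \<le> \<bar>llr_weight$a * S$a$b * llr_weight$b\<bar> * (norm x * norm y)"
      by (intro mult_left_mono mult_mono component_le_norm_cart) auto
    finally show "\<bar>x$a * llr_weight$a * S$a$b * llr_weight$b * y$b\<bar> \<le> \<bar>llr_weight$a * S$a$b * llr_weight$b\<bar> * (norm x * norm y)" .
  qed
  also have "\<dots> = weight_norm * norm x * norm y"
    by (simp add: weight_norm_def sum_distrib_right mult.assoc)
  finally show ?thesis .
qed

lemma weighted_form_uniform: "(real CARD('n))^2 * weighted_form uniform uniform = \<sigma>2"
proof -
  have "weighted_form uniform uniform = (1 / real CARD('n))^2 * (llr_weight \<bullet> (S *v llr_weight))"
    unfolding weighted_form_def uniform_def
    by (simp add: inner_vec_def matrix_vector_mult_def sum_distrib_left power2_eq_square algebra_simps)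
  then show ?thesis using llr_weight_sigma by (simp add: power2_eq_square)
qed

lemma weighted_form_near_uniform:
  assumes "j \<ge> 1"
  shows "\<bar>weighted_form (node_row j n) (node_row j n) - weighted_form uniform uniform\<bar>
    \<le> weight_norm * (2 * norm uniform + 1) * norm (deviation i j n)"
proof -
  let ?d = "deviation i j n"
  have w0: "0 \<le> weight_norm" unfolding weight_norm_def by (intro sum_nonneg) auto
  have d1: "norm ?d \<le> 1" using deviation_le_one[OF assms, of i n] by (simp add: power_le_one_iff)
  have "weighted_form (node_row j n) (node_row j n) - weighted_form uniform uniform
      = weighted_form uniform ?d + weighted_form ?d uniform + weighted_form ?d ?d"
    unfolding node_row_split weighted_form_expand by simp
  then have "\<bar>weighted_form (node_row j n) (node_row j n) - weighted_form uniform uniform\<bar>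
      \<le> \<bar>weighted_form uniform ?d\<bar> + \<bar>weighted_form ?d uniform\<bar> + \<bar>weighted_form ?d ?d\<bar>" by simp
  also have "\<dots> \<le> weight_norm * norm uniform * norm ?d + weight_norm * norm ?d * norm uniform
      + weight_norm * norm ?d * norm ?d"
    using weighted_form_bound[of uniform ?d] weighted_form_bound[of ?d uniform] weighted_form_bound[of ?d ?d]
    by linarith
  also have "weight_norm * norm ?d * norm ?d \<le> weight_norm * norm ?d * 1"
    using w0 d1 by (intro mult_left_mono) auto
  finally show ?thesis by (simp add: algebra_simps)
qed

lemma stat_variance_lim: "(\<lambda>k. real k * stat_variance k) \<longlonglongrightarrow> \<sigma>2"
proof -
  let ?N = "real CARD('n)"
  define C where "C = weight_norm * (2 * norm uniform + 1)"
  have C0: "0 \<le> C" unfolding C_def weight_norm_def by (intro mult_nonneg_nonneg sum_nonneg) auto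
  obtain K where K: "\<And>k. (\<Sum>j\<in>{1..k}. norm (deviation i j (k - j))) \<le> K"
    using deviation_sum_bounded by blast
  show ?thesis
  proof (rule limit_by_rate[where C = "?N^2 * C * K"])
    fix k :: nat assume k: "k \<ge> 1"
    have e: "real k * stat_variance k - \<sigma>2
        = ?N^2 / real k * (\<Sum>j\<in>{1..k}. weighted_form (node_row j (k - j)) (node_row j (k - j)) - weighted_form uniform uniform)"
      unfolding stat_variance_def stat_coeff_form weighted_form_uniform[symmetric] using k
      by (simp add: sum_subtractf sum_distrib_left power2_eq_square field_simps)
    have "\<bar>\<Sum>j\<in>{1..k}. weighted_form (node_row j (k - j)) (node_row j (k - j)) - weighted_form uniform uniform\<bar>
        \<le> C * K"
    proof -
      have "\<bar>\<Sum>j\<in>{1..k}. weighted_form (node_row j (k - j)) (node_row j (k - j)) - weighted_form uniform uniform\<bar>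
          \<le> (\<Sum>j\<in>{1..k}. C * norm (deviation i j (k - j)))"
        unfolding C_def by (rule order_trans[OF sum_abs sum_mono]) (rule weighted_form_near_uniform, simp)
      also have "\<dots> \<le> C * K" using K C0 by (simp add: sum_distrib_left[symmetric] mult_left_mono)
      finally show ?thesis .
    qed
    then have "?N^2 / real k * \<bar>\<Sum>j\<in>{1..k}. weighted_form (node_row j (k - j)) (node_row j (k - j))
        - weighted_form uniform uniform\<bar> \<le> ?N^2 / real k * (C * K)"
      by (rule mult_left_mono) simp
    then have "\<bar>real k * stat_variance k - \<sigma>2\<bar> \<le> ?N^2 / real k * (C * K)"
      unfolding e abs_mult by simp
    then show "\<bar>real k * stat_variance k - \<sigma>2\<bar> \<le> ?N^2 * C * K / real k" by simp
  qed
qed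

lemma stat_gaussian_moments: "gaussian_moments M stat stat_mean stat_variance mL \<sigma>2"
  by (intro gaussian_moments.intro gaussian_moments_axioms.intro prob stat_measurable stat_mgf
      stat_mean_lim stat_variance_lim sigma_pos)

end

theorem theorem9:
  fixes M :: "'w measure"
    and \<zeta> :: "nat \<Rightarrow> 'w \<Rightarrow> real^'n"
    and S :: "real^'n^'n"
    and m0 m1 :: "real^'n"
    and W :: "nat \<Rightarrow> real^'n^'n"
    and Wmin :: real
    and B :: nat
  assumes "prob_space M"
    and S_pd: "pos_def_mat S"
    and m_ne: "m0 \<noteq> m1"
    and indep: "prob_space.indep_vars M (\<lambda>_. borel) \<zeta> {1..}"
    and gauss: "\<And>k. k \<ge> 1 \<Longrightarrow> distributed M lborel (\<zeta> k) (\<lambda>x. ennreal (gauss_density S x))"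
    and W_sym: "\<And>k. k \<ge> 1 \<Longrightarrow> transpose (W k) = W k"
    and W_nonneg: "\<And>k i j. k \<ge> 1 \<Longrightarrow> W k $ i $ j \<ge> 0"
    and W_stoch: "\<And>k i. k \<ge> 1 \<Longrightarrow> (\<Sum>j\<in>UNIV. W k $ i $ j) = 1"
    and Wmin: "0 < Wmin" "Wmin < 1"
    and W_diag: "\<And>k i. k \<ge> 1 \<Longrightarrow> W k $ i $ i \<ge> Wmin"
    and W_off: "\<And>k i j. k \<ge> 1 \<Longrightarrow> i \<noteq> j \<Longrightarrow> W k $ i $ j > 0 \<Longrightarrow> W k $ i $ j \<ge> Wmin"
    and B_pos: "B \<ge> 1"
    and conn: "\<And>k i j. k \<ge> 1 \<Longrightarrow>
       (i, j) \<in> {(a, b). a \<noteq> b \<and> (\<exists>l\<in>{k+1..k+B}. W l $ a $ b > 0)}\<^sup>*"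
    and l_range: "l \<in> {0::nat, 1}"
  shows "let d = m1 - m0;
             \<sigma>2 = d \<bullet> (matrix_inv S *v d);
             mL = (-1) ^ (l + 1) / 2 * \<sigma>2;
             ml = (if l = 0 then m0 else m1);
             I = (\<lambda>t::real. (t - mL)\<^sup>2 / (2 * \<sigma>2));
             \<theta> = (\<lambda>k. distr M borel
                    (\<lambda>\<omega>. rcons W (\<lambda>j. eta_vec S m0 m1 (ml + \<zeta> j \<omega>)) k $ i))
         in satisfies_LDP \<theta> I \<and> good_rate_function I"
proof -
  have consensus: "consensus_matrix Wmin (W k)" if "k \<ge> 1" for k
    unfolding consensus_matrix_def using that W_sym W_nonneg W_stoch W_diag W_off by blast
  interpret running_consensus_detection W Wmin B M \<zeta> S m0 m1 l i
    by (intro running_consensus_detection.intro consensus_network.intro running_consensus_detection_axioms.intro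
        consensus Wmin(1) B_pos conn assms(1) S_pd m_ne indep gauss l_range)
  interpret gaussian_moments M stat stat_mean stat_variance mL \<sigma>2
    by (rule stat_gaussian_moments)
  have "satisfies_LDP law I" by (rule LDP)
  moreover have "good_rate_function I" by (rule good_gauss_rate[OF sigma_pos])
  ultimately show ?thesis
    unfolding Let_def stat_def[abs_def] true_mean_def mL_def \<sigma>2_def gauss_rate_def[abs_def] by simp
qed

end
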